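(* Let $s\le0$. There exists $C>0$ (depending only on $s$) such that for all $R>0$, all $2\le A\le N$, all $t\ge0$, with $\phi$ defined by $\widehat\phi=R(\mathbf 1_{N+I_A}+\mathbf 1_{2N+I_A})$: $$\|U_1[\phi](t)\|_{H^s}\le CRA^{1/2}N^s,$$ and for all $k\ge2$, $$\|U_k[\phi](t)\|_{H^s}\le t^{\frac{k-1}{2}}(CRA)^{k-1}R\,g(A),$$ where $g(A)=A^{s+1/2}$ if $-\frac12<s\le0$, $g(A)=(\log A)^{1/2}$ if $s=-\frac12$, and $g(A)=1$ if $s<-\frac12$.
   Context: $I_A=[-\frac A2,\frac A2)$; $\widehat f(\xi)=\int e^{-ix\xi}f(x)dx$; $\|f\|_{H^s}=\frac1{\sqrt{2\pi}}(\int\langle\xi\rangle^{2s}|\widehat f|^2d\xi)^{1/2}$; $|D|$ is the Fourier multiplier with symbol $|\xi|$; $\mu\in\{-1,1\}$. $U_1[\phi](t)=e^{-it|D|}\phi$ and for $k\ge2$, $U_k[\phi](t)=-i\mu\sum_{k_1+k_2+k_3=k,\ k_i\ge1}\int_0^te^{-i(t-\tau)|D|}(U_{k_1}[\phi]\overline{U_{k_2}[\phi]}U_{k_3}[\phi])(\tau)d\tau$. *)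

theory Defs
  imports "HOL-Analysis.Analysis"
begin

definition ft :: "(real \<Rightarrow> complex) \<Rightarrow> real \<Rightarrow> complex" where
  "ft f \<xi> = (LINT x|lborel. cis (- (x * \<xi>)) * f x)"

definition ift :: "(real \<Rightarrow> complex) \<Rightarrow> real \<Rightarrow> complex" where
  "ift F x = complex_of_real (1 / (2 * pi)) * (LINT \<xi>|lborel. cis (x * \<xi>) * F \<xi>)"

text \<open>H^s membership and norm of the function whose Fourier transform is F:
  ||f||_{H^s} = (2 pi)^(-1/2) (int <xi>^(2s) |hat f|^2)^(1/2), with <xi> = sqrt(1+xi^2).\<close>
definition in_Hs_hat :: "real \<Rightarrow> (real \<Rightarrow> complex) \<Rightarrow> bool" where
  "in_Hs_hat s F \<longleftrightarrow> F \<in> borel_measurable lborel \<and>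
     integrable lborel (\<lambda>\<xi>. (sqrt (1 + \<xi>\<^sup>2)) powr (2 * s) * (cmod (F \<xi>))\<^sup>2)"

definition Hs_norm_hat :: "real \<Rightarrow> (real \<Rightarrow> complex) \<Rightarrow> real" where
  "Hs_norm_hat s F = (1 / sqrt (2 * pi)) *
     sqrt (LINT \<xi>|lborel. (sqrt (1 + \<xi>\<^sup>2)) powr (2 * s) * (cmod (F \<xi>))\<^sup>2)"

text \<open>Fourier transform of the Picard iterates U_k[phi](t), given the Fourier transform
  phih of phi.  U_1[phi](t) = e^(-it|D|) phi, and for k >= 2 the Duhamel formula
  U_k(t) = -i mu sum_{k1+k2+k3=k, ki>=1} int_0^t e^(-i(t-tau)|D|)(U_k1 conj(U_k2) U_k3)(tau) dtau,
  written on the Fourier side (the multiplier e^(-i(t-tau)|D|) acts as multiplication by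
  e^(-i(t-tau)|xi|); the physical-space iterates are ift of these).\<close>
function Uhat :: "real \<Rightarrow> (real \<Rightarrow> complex) \<Rightarrow> nat \<Rightarrow> real \<Rightarrow> real \<Rightarrow> complex" where
  "Uhat \<mu> phih k t \<xi> =
    (if k = 0 then 0
     else if k = 1 then cis (- (t * \<bar>\<xi>\<bar>)) * phih \<xi>
     else - \<i> * complex_of_real \<mu> *
       (\<Sum>(k1, k2, k3) \<in> {(a, b, c). a + b + c = k \<and> 1 \<le> a \<and> 1 \<le> b \<and> 1 \<le> c}.
          LINT \<tau>:{0..t}|lborel. cis (- ((t - \<tau>) * \<bar>\<xi>\<bar>)) *
            ft (\<lambda>x. ift (Uhat \<mu> phih k1 \<tau>) x * cnj (ift (Uhat \<mu> phih k2 \<tau>) x)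
                     * ift (Uhat \<mu> phih k3 \<tau>) x) \<xi>))"
  by pat_completeness auto
termination
  by (relation "Wellfounded.measure (\<lambda>(\<mu>, phih, k, t, \<xi>). k)") auto

definition U :: "real \<Rightarrow> (real \<Rightarrow> complex) \<Rightarrow> nat \<Rightarrow> real \<Rightarrow> real \<Rightarrow> complex" where
  "U \<mu> phih k t = ift (Uhat \<mu> phih k t)"

definition phi_hat :: "real \<Rightarrow> real \<Rightarrow> real \<Rightarrow> real \<Rightarrow> complex" where
  "phi_hat R N A \<xi> = complex_of_real (R * (indicator {N - A/2 ..< N + A/2} \<xi>
                                        + indicator {2*N - A/2 ..< 2*N + A/2} \<xi>))"

definition gA :: "real \<Rightarrow> real \<Rightarrow> real" where
  "gA s A = (if s > -1/2 then A powr (s + 1/2)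
             else if s = -1/2 then (ln A) powr (1/2) else 1)"

end

theory Submission
  imports Defs "HOL-Probability.Probability"
begin

(* On the Fourier side the cubic term of the Duhamel iteration is a triple convolution: the
  transform of ift F * cnj (ift G) * ift H at xi is (2 pi)^-2 times the integral of
  F a * cnj (G b) * H c over a - b + c = xi.  Young's inequality therefore bounds the sup norm of
  U_k(t) by (sup norm) * (L1 norm) * (L1 norm) of three earlier iterates, and its L1 norm by the
  product of three L1 norms, the time integral contributing a factor t.  The weights 4^(k-1)/k^2
  are reproduced by the sum over compositions k = k1 + k2 + k3, so induction gives
  |U_k(t)| <= c_k R^k A^(k-1) t^((k-1)/2).  Frequencies combine as xi1 - xi2 + xi3, hence U_k(t)
  lives within (k - 1/2) A of the 4k+1 points jN, |j| <= 2k; as <xi>^(2s) decreases in |xi|, its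
  integral over that set is at most 4k+1 times the integral over [-kA, kA], which is of order
  k A^(2s+1), k log A or k according to the sign of 2s+1.  The cubic products need not be
  integrable, so the convolution identity is proved for Gaussian-damped products and passed to the
  limit. *)

section \<open>Gaussian regularisation\<close>

lemma borel_measurable_cis [measurable]: "cis \<in> borel_measurable borel"
  by (intro borel_measurable_continuous_onI continuous_intros)

lemma borel_measurable_cnj [measurable]: "cnj \<in> borel_measurable borel"
  by (intro borel_measurable_continuous_onI continuous_intros)

definition gauss_window :: "real \<Rightarrow> real \<Rightarrow> real" where
  "gauss_window \<sigma> x = exp (- ((x / \<sigma>)\<^sup>2) / 2)"

definition gauss_kernel :: "real \<Rightarrow> real \<Rightarrow> real" where
  "gauss_kernel \<sigma> y = \<sigma> * sqrt (2 * pi) * exp (- ((\<sigma> * y)\<^sup>2) / 2)"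

lemma gauss_window_measurable [measurable]: "gauss_window \<sigma> \<in> borel_measurable borel"
  unfolding gauss_window_def by measurable

lemma gauss_kernel_measurable [measurable]: "gauss_kernel \<sigma> \<in> borel_measurable borel"
  unfolding gauss_kernel_def by measurable

lemma gauss_window_nonneg: "0 \<le> gauss_window \<sigma> x"
  unfolding gauss_window_def by simp

lemma gauss_window_le_1: "gauss_window \<sigma> x \<le> 1"
  unfolding gauss_window_def by simp

lemma gauss_kernel_nonneg: "0 < \<sigma> \<Longrightarrow> 0 \<le> gauss_kernel \<sigma> y"
  unfolding gauss_kernel_def by simp

lemma gauss_kernel_minus: "gauss_kernel \<sigma> (- y) = gauss_kernel \<sigma> y"
  unfolding gauss_kernel_def by (simp add: power_mult_distrib)

lemma ft_gauss_window:
  assumes \<sigma>: "0 < \<sigma>"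
  shows "ft (\<lambda>x. complex_of_real (gauss_window \<sigma> x)) y = complex_of_real (gauss_kernel \<sigma> y)"
proof -
  have "ft (\<lambda>x. complex_of_real (gauss_window \<sigma> x)) y
      = \<bar>\<sigma>\<bar> *\<^sub>R (LINT u|lborel. cis (- ((0 + \<sigma> * u) * y)) * complex_of_real (gauss_window \<sigma> (0 + \<sigma> * u)))"
    unfolding ft_def using \<sigma> by (intro lborel_integral_real_affine) simp
  also have "(\<lambda>u. cis (- ((0 + \<sigma> * u) * y)) * complex_of_real (gauss_window \<sigma> (0 + \<sigma> * u)))
      = (\<lambda>u. complex_of_real (sqrt (2 * pi)) * (std_normal_density u *\<^sub>R iexp ((- \<sigma> * y) * u)))"
    using \<sigma> by (auto simp: gauss_window_def std_normal_density_def cis_conv_exp scaleR_conv_of_real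
        power_mult_distrib algebra_simps)
  also have "(LINT u|lborel. complex_of_real (sqrt (2 * pi)) * (std_normal_density u *\<^sub>R iexp ((- \<sigma> * y) * u)))
      = complex_of_real (sqrt (2 * pi)) * (LINT u|lborel. std_normal_density u *\<^sub>R iexp ((- \<sigma> * y) * u))"
    by (rule integral_mult_right_zero)
  also have "(LINT u|lborel. std_normal_density u *\<^sub>R iexp ((- \<sigma> * y) * u)) = char std_normal_distribution (- \<sigma> * y)"
    unfolding char_def by (subst integral_density) auto
  also have "char std_normal_distribution (- \<sigma> * y) = exp (- ((\<sigma> * y)\<^sup>2) / 2)"
    by (simp add: char_std_normal_distribution power_mult_distrib)
  finally show ?thesis
    using \<sigma> by (simp add: gauss_kernel_def scaleR_conv_of_real)
qed

lemma gauss_window_integrable: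
  assumes \<sigma>: "0 < \<sigma>"
  shows "integrable lborel (gauss_window \<sigma>)"
proof -
  have "gauss_window \<sigma> = (\<lambda>x. sqrt (2 * pi * \<sigma>\<^sup>2) * normal_density 0 \<sigma> x)"
    using \<sigma> by (simp add: fun_eq_iff gauss_window_def normal_density_def power_divide)
  then show ?thesis
    using \<sigma> by (simp add: integrable_normal_density)
qed

lemma nn_integral_gauss_kernel_shift:
  assumes \<sigma>: "0 < \<sigma>"
  shows "(\<integral>\<^sup>+a. ennreal (gauss_kernel \<sigma> (t - a)) \<partial>lborel) = ennreal (2 * pi)"
proof -
  have kernel_eq: "gauss_kernel \<sigma> (t - a) = 2 * pi * normal_density t (1 / \<sigma>) a" for a
  proof -
    have "sqrt (2 * pi * (1 / \<sigma>)\<^sup>2) = sqrt (2 * pi) / \<sigma>"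
      using \<sigma> by (simp add: real_sqrt_mult real_sqrt_divide power_divide)
    moreover have "(a - t)\<^sup>2 / (2 * (1 / \<sigma>)\<^sup>2) = (\<sigma> * (t - a))\<^sup>2 / 2"
      using \<sigma> by (simp add: power_divide power_mult_distrib power2_commute)
    moreover have "2 * pi = sqrt (2 * pi) * sqrt (2 * pi)"
      by simp
    ultimately show ?thesis
      unfolding gauss_kernel_def normal_density_def by (simp add: field_simps)
  qed
  have "(\<integral>\<^sup>+a. ennreal (gauss_kernel \<sigma> (t - a)) \<partial>lborel)
      = ennreal (\<integral>a. 2 * pi * normal_density t (1 / \<sigma>) a \<partial>lborel)"
    unfolding kernel_eq using \<sigma>
    by (intro nn_integral_eq_integral integrable_mult_right integrable_normal_density AE_I2) auto
  also have "\<dots> = ennreal (2 * pi)"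
    using \<sigma> by (simp add: integral_normal_density)
  finally show ?thesis .
qed

lemma nn_integral_gauss_kernel:
  "0 < \<sigma> \<Longrightarrow> (\<integral>\<^sup>+y. ennreal (gauss_kernel \<sigma> y) \<partial>lborel) = ennreal (2 * pi)"
  using nn_integral_gauss_kernel_shift[of \<sigma> 0] by (simp add: gauss_kernel_minus)

lemma gauss_kernel_le_tail:
  assumes \<sigma>: "0 < \<sigma>" and \<delta>: "0 \<le> \<delta>" "\<delta> \<le> \<bar>y\<bar>"
  shows "gauss_kernel \<sigma> y \<le> \<sigma> * sqrt (2 * pi) * exp (- ((\<sigma> * \<delta>)\<^sup>2) / 2)"
proof -
  have "\<delta>\<^sup>2 \<le> y\<^sup>2"
    using \<delta> by (metis abs_le_square_iff abs_of_nonneg)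
  then have "(\<sigma> * \<delta>)\<^sup>2 \<le> (\<sigma> * y)\<^sup>2"
    by (simp add: power_mult_distrib mult_left_mono)
  then show ?thesis
    unfolding gauss_kernel_def using \<sigma> by (intro mult_left_mono) auto
qed

lemma tendsto_gauss_window: "(\<lambda>n. gauss_window (real n + 1) x) \<longlonglongrightarrow> 1"
proof -
  have "(\<lambda>n. x / (real n + 1)) \<longlonglongrightarrow> 0"
    by real_asymp
  then have "(\<lambda>n. exp (- ((x / (real n + 1))\<^sup>2) / 2)) \<longlonglongrightarrow> exp (- (0\<^sup>2) / 2)"
    by (intro tendsto_exp tendsto_divide tendsto_minus tendsto_power tendsto_const) auto
  then show ?thesis
    unfolding gauss_window_def by simp
qed

section \<open>The cubic term on the Fourier side\<close>

abbreviation inv_2pi :: real where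
  "inv_2pi \<equiv> 1 / (2 * pi)"

definition ift_cubic :: "(real \<Rightarrow> complex) \<Rightarrow> (real \<Rightarrow> complex) \<Rightarrow> (real \<Rightarrow> complex) \<Rightarrow> real \<Rightarrow> complex" where
  "ift_cubic F G H x = ift F x * cnj (ift G x) * ift H x"

lemma ift_measurable [measurable]:
  assumes [measurable]: "F \<in> borel_measurable borel"
  shows "ift F \<in> borel_measurable borel"
  unfolding ift_def by measurable

lemma ift_cubic_measurable [measurable]:
  assumes [measurable]: "F \<in> borel_measurable borel" "G \<in> borel_measurable borel" "H \<in> borel_measurable borel"
  shows "ift_cubic F G H \<in> borel_measurable borel"
  unfolding ift_cubic_def[abs_def] by measurable

lemma ennreal_norm_integral_le: "ennreal (norm (integral\<^sup>L M f)) \<le> (\<integral>\<^sup>+x. norm (f x) \<partial>M)"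
  by (cases "integrable M f") (auto simp: integral_norm_bound_ennreal not_integrable_integral_eq)

lemma nn_integral_norm_eq_integral:
  fixes F :: "real \<Rightarrow> 'b::{banach, second_countable_topology}"
  assumes "integrable lborel F"
  shows "(\<integral>\<^sup>+a. ennreal (norm (F a)) \<partial>lborel) = ennreal (\<integral>a. norm (F a) \<partial>lborel)"
  using assms by (intro nn_integral_eq_integral integrable_norm) auto

lemma integrable_mult_bounded:
  fixes f g :: "real \<Rightarrow> complex"
  assumes g: "integrable lborel g" and [measurable]: "f \<in> borel_measurable borel"
    and f: "\<And>x. norm (f x) \<le> B"
  shows "integrable lborel (\<lambda>x. f x * g x)"
proof (rule Bochner_Integration.integrable_bound)
  show "integrable lborel (\<lambda>x. complex_of_real B * g x)"
    using g by simp
  show "(\<lambda>x. f x * g x) \<in> borel_measurable lborel"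
    using g by auto
  have "0 \<le> B"
    using f[of 0] norm_ge_zero order.trans by blast
  then show "AE x in lborel. norm (f x * g x) \<le> norm (complex_of_real B * g x)"
    using f by (intro AE_I2) (auto simp: norm_mult intro!: mult_right_mono)
qed

lemma integrable_lborel_pair_mult:
  fixes f g :: "real \<Rightarrow> complex"
  assumes f: "integrable lborel f" and g: "integrable lborel g"
  shows "integrable (lborel \<Otimes>\<^sub>M lborel) (\<lambda>p. f (fst p) * g (snd p))"
proof (rule lborel_pair.Fubini_integrable)
  have [measurable]: "f \<in> borel_measurable borel" "g \<in> borel_measurable borel"
    using f g by auto
  show "(\<lambda>p. f (fst p) * g (snd p)) \<in> borel_measurable (lborel \<Otimes>\<^sub>M lborel)"
    by measurable
  show "integrable lborel (\<lambda>x. \<integral>y. norm (f (fst (x, y)) * g (snd (x, y))) \<partial>lborel)"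
    using f by (simp add: norm_mult integrable_norm)
  show "AE x in lborel. integrable lborel (\<lambda>y. f (fst (x, y)) * g (snd (x, y)))"
    using g by simp
qed

lemma norm_ift_le: "norm (ift F x) \<le> inv_2pi * (\<integral>a. norm (F a) \<partial>lborel)"
proof -
  have "norm (LINT a|lborel. cis (x * a) * F a) \<le> (\<integral>a. norm (cis (x * a) * F a) \<partial>lborel)"
    by (rule integral_norm_bound)
  then show ?thesis
    by (simp add: ift_def norm_mult norm_divide divide_right_mono)
qed

lemma cnj_ift: "cnj (ift G x) = ift (\<lambda>b. cnj (G (- b))) x"
proof -
  have "cnj (LINT b|lborel. cis (x * b) * G b) = (LINT b|lborel. cnj (cis (x * b) * G b))"
    by (rule Bochner_Integration.integral_cnj[symmetric])
  also have "\<dots> = (LINT b|lborel. cis (- (x * b)) * cnj (G b))"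
    by (simp add: cis_cnj)
  also have "\<dots> = (LINT b|lborel. cis (x * b) * cnj (G (- b)))"
    using lborel_integral_real_affine[of "-1" "\<lambda>b. cis (x * b) * cnj (G (- b))" 0] by simp
  finally show ?thesis
    by (simp add: ift_def)
qed

lemma ft_ift_mult:
  fixes F u :: "real \<Rightarrow> complex"
  assumes F: "integrable lborel F" and u: "integrable lborel u"
  shows "ft (\<lambda>x. ift F x * u x) \<xi> = complex_of_real inv_2pi * (\<integral>a. F a * ft u (\<xi> - a) \<partial>lborel)"
proof -
  have [measurable]: "F \<in> borel_measurable borel" "u \<in> borel_measurable borel"
    using F u by auto
  define h where "h x a = complex_of_real inv_2pi * (cis (- (x * (\<xi> - a))) * F a * u x)" for x a
  have h_integrable: "integrable (lborel \<Otimes>\<^sub>M lborel) (case_prod h)"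
  proof (rule Bochner_Integration.integrable_bound)
    show "integrable (lborel \<Otimes>\<^sub>M lborel) (\<lambda>p. complex_of_real inv_2pi * (u (fst p) * F (snd p)))"
      using integrable_lborel_pair_mult[OF u F] by simp
    show "case_prod h \<in> borel_measurable (lborel \<Otimes>\<^sub>M lborel)"
      unfolding h_def by measurable
    show "AE p in lborel \<Otimes>\<^sub>M lborel. norm (case_prod h p) \<le> norm (complex_of_real inv_2pi * (u (fst p) * F (snd p)))"
      by (intro AE_I2) (auto simp: h_def norm_mult norm_divide mult.commute split: prod.splits)
  qed
  have "ft (\<lambda>x. ift F x * u x) \<xi> = (\<integral>x. (\<integral>a. h x a \<partial>lborel) \<partial>lborel)"
    unfolding ft_def ift_def h_def
    by (intro Bochner_Integration.integral_cong)
       (simp_all flip: integral_mult_right_zero integral_mult_left_zero add: cis_mult algebra_simps)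
  also have "\<dots> = (\<integral>a. (\<integral>x. h x a \<partial>lborel) \<partial>lborel)"
    using lborel_pair.Fubini_integral[OF h_integrable] by simp
  also have "\<dots> = (\<integral>a. complex_of_real inv_2pi * (F a * ft u (\<xi> - a)) \<partial>lborel)"
    unfolding h_def ft_def
    by (intro Bochner_Integration.integral_cong)
       (simp_all flip: integral_mult_right_zero add: algebra_simps)
  finally show ?thesis
    by simp
qed

lemma ft_cnj_ift_mult:
  fixes G v :: "real \<Rightarrow> complex"
  assumes G: "integrable lborel G" and v: "integrable lborel v"
  shows "ft (\<lambda>x. cnj (ift G x) * v x) \<eta> = complex_of_real inv_2pi * (\<integral>b. cnj (G b) * ft v (\<eta> + b) \<partial>lborel)"
proof -
  have "integrable lborel (\<lambda>b. cnj (G (- b)))"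
    using lborel_integrable_real_affine[of "\<lambda>b. cnj (G b)" "-1" 0] G by simp
  then have "ft (\<lambda>x. cnj (ift G x) * v x) \<eta>
      = complex_of_real inv_2pi * (\<integral>a. cnj (G (- a)) * ft v (\<eta> - a) \<partial>lborel)"
    unfolding cnj_ift by (rule ft_ift_mult[OF _ v])
  also have "(\<integral>a. cnj (G (- a)) * ft v (\<eta> - a) \<partial>lborel) = (\<integral>b. cnj (G b) * ft v (\<eta> + b) \<partial>lborel)"
    using lborel_integral_real_affine[of "-1" "\<lambda>a. cnj (G (- a)) * ft v (\<eta> - a)" 0] by simp
  finally show ?thesis .
qed

lemma ft_regularised_ift_cubic:
  fixes F G H :: "real \<Rightarrow> complex"
  assumes F: "integrable lborel F" and G: "integrable lborel G" and H: "integrable lborel H"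
    and \<sigma>: "0 < \<sigma>"
  shows "ft (\<lambda>x. complex_of_real (gauss_window \<sigma> x) * ift_cubic F G H x) \<xi>
    = complex_of_real inv_2pi * (\<integral>c. H c * (complex_of_real inv_2pi * (\<integral>b. cnj (G b) *
        (complex_of_real inv_2pi * (\<integral>a. F a * complex_of_real (gauss_kernel \<sigma> (\<xi> - c + b - a)) \<partial>lborel))
        \<partial>lborel)) \<partial>lborel)"
proof -
  have [measurable]: "F \<in> borel_measurable borel" "G \<in> borel_measurable borel"
    using F G by auto
  define v where "v x = ift F x * complex_of_real (gauss_window \<sigma> x)" for x
  define u where "u x = cnj (ift G x) * v x" for x
  have window: "integrable lborel (\<lambda>x. complex_of_real (gauss_window \<sigma> x))"
    using gauss_window_integrable[OF \<sigma>] by simp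
  have v_integrable: "integrable lborel v"
    unfolding v_def by (rule integrable_mult_bounded[OF window]) (auto intro: norm_ift_le)
  have u_integrable: "integrable lborel u"
    unfolding u_def by (rule integrable_mult_bounded[OF v_integrable]) (auto intro: norm_ift_le)
  have ft_v: "ft v \<zeta> = complex_of_real inv_2pi * (\<integral>a. F a * complex_of_real (gauss_kernel \<sigma> (\<zeta> - a)) \<partial>lborel)" for \<zeta>
    unfolding v_def using ft_ift_mult[OF F window, of \<zeta>] by (simp add: ft_gauss_window[OF \<sigma>])
  have ft_u: "ft u \<eta> = complex_of_real inv_2pi * (\<integral>b. cnj (G b) * ft v (\<eta> + b) \<partial>lborel)" for \<eta>
    unfolding u_def by (rule ft_cnj_ift_mult[OF G v_integrable])
  have "(\<lambda>x. complex_of_real (gauss_window \<sigma> x) * ift_cubic F G H x) = (\<lambda>x. ift H x * u x)"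
    by (auto simp: u_def v_def ift_cubic_def fun_eq_iff)
  then show ?thesis
    using ft_ift_mult[OF H u_integrable, of \<xi>] by (simp add: ft_u ft_v)
qed

lemma ft_eq_0_if_not_integrable:
  assumes [measurable]: "f \<in> borel_measurable borel" and not_integrable: "\<not> integrable lborel f"
  shows "ft f \<xi> = 0"
proof -
  have "\<not> integrable lborel (\<lambda>x. cis (- (x * \<xi>)) * f x)"
  proof
    assume "integrable lborel (\<lambda>x. cis (- (x * \<xi>)) * f x)"
    then have "integrable lborel (\<lambda>x. cis (x * \<xi>) * (cis (- (x * \<xi>)) * f x))"
      by (rule integrable_mult_bounded) auto
    then show False
      using not_integrable by (simp add: cis_mult mult.assoc[symmetric])
  qed
  then show ?thesis
    unfolding ft_def by (rule not_integrable_integral_eq)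
qed

lemma tendsto_ft_regularised:
  fixes f :: "real \<Rightarrow> complex"
  assumes f: "integrable lborel f"
  shows "(\<lambda>n. ft (\<lambda>x. complex_of_real (gauss_window (real n + 1) x) * f x) \<xi>) \<longlonglongrightarrow> ft f \<xi>"
  unfolding ft_def
proof (rule integral_dominated_convergence[where w="\<lambda>x. norm (f x)"])
  have [measurable]: "f \<in> borel_measurable borel"
    using f by auto
  show "(\<lambda>x. cis (- (x * \<xi>)) * f x) \<in> borel_measurable lborel"
    and "\<And>n. (\<lambda>x. cis (- (x * \<xi>)) * (complex_of_real (gauss_window (real n + 1) x) * f x)) \<in> borel_measurable lborel"
    by measurable
  show "integrable lborel (\<lambda>x. norm (f x))"
    using f by auto
  have "(\<lambda>n. cis (- (x * \<xi>)) * (complex_of_real (gauss_window (real n + 1) x) * f x))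
      \<longlonglongrightarrow> cis (- (x * \<xi>)) * (complex_of_real 1 * f x)" for x
    by (intro tendsto_intros tendsto_gauss_window)
  then show "AE x in lborel. (\<lambda>n. cis (- (x * \<xi>)) * (complex_of_real (gauss_window (real n + 1) x) * f x))
      \<longlonglongrightarrow> cis (- (x * \<xi>)) * f x"
    by simp
  show "\<And>n. AE x in lborel. norm (cis (- (x * \<xi>)) * (complex_of_real (gauss_window (real n + 1) x) * f x)) \<le> norm (f x)"
    by (intro AE_I2) (auto simp: norm_mult gauss_window_nonneg gauss_window_le_1 intro!: mult_left_le_one_le)
qed

definition gauss_conv1 :: "(real \<Rightarrow> complex) \<Rightarrow> real \<Rightarrow> real \<Rightarrow> ennreal" where
  "gauss_conv1 F \<sigma> \<zeta> = (\<integral>\<^sup>+a. ennreal (norm (F a)) * ennreal (gauss_kernel \<sigma> (\<zeta> - a)) \<partial>lborel)"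

definition gauss_conv2 :: "(real \<Rightarrow> complex) \<Rightarrow> (real \<Rightarrow> complex) \<Rightarrow> real \<Rightarrow> real \<Rightarrow> ennreal" where
  "gauss_conv2 F G \<sigma> \<eta> = (\<integral>\<^sup>+b. ennreal (norm (G b)) * gauss_conv1 F \<sigma> (\<eta> + b) \<partial>lborel)"

definition gauss_conv3 ::
    "(real \<Rightarrow> complex) \<Rightarrow> (real \<Rightarrow> complex) \<Rightarrow> (real \<Rightarrow> complex) \<Rightarrow> real \<Rightarrow> real \<Rightarrow> ennreal" where
  "gauss_conv3 F G H \<sigma> \<xi> = (\<integral>\<^sup>+c. ennreal (norm (H c)) * gauss_conv2 F G \<sigma> (\<xi> - c) \<partial>lborel)"

lemma gauss_conv1_measurable [measurable]:
  assumes [measurable]: "F \<in> borel_measurable borel"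
  shows "gauss_conv1 F \<sigma> \<in> borel_measurable borel"
  unfolding gauss_conv1_def by measurable

lemma gauss_conv2_measurable [measurable]:
  assumes [measurable]: "F \<in> borel_measurable borel" "G \<in> borel_measurable borel"
  shows "gauss_conv2 F G \<sigma> \<in> borel_measurable borel"
  unfolding gauss_conv2_def by measurable

lemma gauss_conv3_measurable [measurable]:
  assumes [measurable]: "F \<in> borel_measurable borel" "G \<in> borel_measurable borel" "H \<in> borel_measurable borel"
  shows "gauss_conv3 F G H \<sigma> \<in> borel_measurable borel"
  unfolding gauss_conv3_def by measurable

lemma nn_integral_conv:
  fixes h Q :: "real \<Rightarrow> ennreal"
  assumes [measurable]: "h \<in> borel_measurable borel" "Q \<in> borel_measurable borel"
  shows "(\<integral>\<^sup>+\<xi>. (\<integral>\<^sup>+c. h c * Q (\<xi> + t * c) \<partial>lborel) \<partial>lborel)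
    = (\<integral>\<^sup>+c. h c \<partial>lborel) * (\<integral>\<^sup>+y. Q y \<partial>lborel)"
proof -
  have shift: "(\<integral>\<^sup>+\<xi>. Q (\<xi> + u) \<partial>lborel) = (\<integral>\<^sup>+y. Q y \<partial>lborel)" for u
    using nn_integral_real_affine[of Q 1 u] by (simp add: add.commute)
  have "(\<integral>\<^sup>+\<xi>. (\<integral>\<^sup>+c. h c * Q (\<xi> + t * c) \<partial>lborel) \<partial>lborel)
      = (\<integral>\<^sup>+c. (\<integral>\<^sup>+\<xi>. h c * Q (\<xi> + t * c) \<partial>lborel) \<partial>lborel)"
    by (rule lborel_pair.Fubini') measurable
  also have "\<dots> = (\<integral>\<^sup>+c. h c * (\<integral>\<^sup>+y. Q y \<partial>lborel) \<partial>lborel)"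
    by (simp add: nn_integral_cmult shift)
  also have "\<dots> = (\<integral>\<^sup>+c. h c \<partial>lborel) * (\<integral>\<^sup>+y. Q y \<partial>lborel)"
    by (rule nn_integral_multc) auto
  finally show ?thesis .
qed

lemma ennreal_norm_inv_2pi_integral_le:
  fixes F K :: "real \<Rightarrow> complex" and B :: "real \<Rightarrow> ennreal"
  assumes "\<And>a. ennreal (norm (K a)) \<le> B a"
  shows "ennreal (norm (complex_of_real inv_2pi * (\<integral>a. F a * K a \<partial>lborel)))
     \<le> ennreal inv_2pi * (\<integral>\<^sup>+a. ennreal (norm (F a)) * B a \<partial>lborel)"
proof -
  have "ennreal (norm (\<integral>a. F a * K a \<partial>lborel)) \<le> (\<integral>\<^sup>+a. ennreal (norm (F a * K a)) \<partial>lborel)"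
    by (rule ennreal_norm_integral_le)
  also have "\<dots> \<le> (\<integral>\<^sup>+a. ennreal (norm (F a)) * B a \<partial>lborel)"
    by (intro nn_integral_mono) (simp add: norm_mult ennreal_mult mult_left_mono assms)
  finally have "ennreal inv_2pi * ennreal (norm (\<integral>a. F a * K a \<partial>lborel))
      \<le> ennreal inv_2pi * (\<integral>\<^sup>+a. ennreal (norm (F a)) * B a \<partial>lborel)"
    by (rule mult_left_mono) simp
  moreover have "ennreal (norm (complex_of_real inv_2pi * z)) = ennreal inv_2pi * ennreal (norm z)" for z
    by (subst ennreal_mult[symmetric]) (auto simp: norm_mult norm_divide)
  ultimately show ?thesis
    by simp
qed

lemma norm_ft_regularised_ift_cubic_le:
  fixes F G H :: "real \<Rightarrow> complex"
  assumes F: "integrable lborel F" and G: "integrable lborel G" and H: "integrable lborel H"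
    and \<sigma>: "0 < \<sigma>"
  shows "ennreal (norm (ft (\<lambda>x. complex_of_real (gauss_window \<sigma> x) * ift_cubic F G H x) \<xi>))
    \<le> ennreal inv_2pi ^ 3 * gauss_conv3 F G H \<sigma> \<xi>"
proof -
  have [measurable]: "F \<in> borel_measurable borel" "G \<in> borel_measurable borel" "H \<in> borel_measurable borel"
    using F G H by auto
  have layer1: "ennreal (norm (complex_of_real inv_2pi *
      (\<integral>a. F a * complex_of_real (gauss_kernel \<sigma> (\<zeta> - a)) \<partial>lborel)))
     \<le> ennreal inv_2pi * gauss_conv1 F \<sigma> \<zeta>" for \<zeta>
    unfolding gauss_conv1_def
    by (rule ennreal_norm_inv_2pi_integral_le) (simp add: gauss_kernel_nonneg[OF \<sigma>])
  have layer2: "ennreal (norm (complex_of_real inv_2pi * (\<integral>b. cnj (G b) *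
        (complex_of_real inv_2pi * (\<integral>a. F a * complex_of_real (gauss_kernel \<sigma> (\<eta> + b - a)) \<partial>lborel))
        \<partial>lborel)))
     \<le> ennreal inv_2pi * (ennreal inv_2pi * gauss_conv2 F G \<sigma> \<eta>)" for \<eta>
  proof -
    have "ennreal (norm (complex_of_real inv_2pi * (\<integral>b. cnj (G b) *
        (complex_of_real inv_2pi * (\<integral>a. F a * complex_of_real (gauss_kernel \<sigma> (\<eta> + b - a)) \<partial>lborel))
        \<partial>lborel)))
      \<le> ennreal inv_2pi * (\<integral>\<^sup>+b. ennreal (norm (cnj (G b))) * (ennreal inv_2pi * gauss_conv1 F \<sigma> (\<eta> + b)) \<partial>lborel)"
      by (rule ennreal_norm_inv_2pi_integral_le) (rule layer1)
    also have "\<dots> = ennreal inv_2pi * (ennreal inv_2pi * gauss_conv2 F G \<sigma> \<eta>)"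
      unfolding gauss_conv2_def by (subst nn_integral_cmult[symmetric]) (auto simp: mult_ac)
    finally show ?thesis .
  qed
  have "ennreal (norm (ft (\<lambda>x. complex_of_real (gauss_window \<sigma> x) * ift_cubic F G H x) \<xi>))
     \<le> ennreal inv_2pi * (\<integral>\<^sup>+c. ennreal (norm (H c)) *
          (ennreal inv_2pi * (ennreal inv_2pi * gauss_conv2 F G \<sigma> (\<xi> - c))) \<partial>lborel)"
    unfolding ft_regularised_ift_cubic[OF F G H \<sigma>]
    by (rule ennreal_norm_inv_2pi_integral_le) (rule layer2)
  also have "\<dots> = ennreal inv_2pi * (ennreal inv_2pi * (ennreal inv_2pi * gauss_conv3 F G H \<sigma> \<xi>))"
    unfolding gauss_conv3_def
    by (subst nn_integral_cmult[symmetric], simp, subst nn_integral_cmult[symmetric]) (auto simp: mult_ac)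
  also have "\<dots> = ennreal inv_2pi ^ 3 * gauss_conv3 F G H \<sigma> \<xi>"
    by (simp only: power3_eq_cube mult.assoc)
  finally show ?thesis .
qed

lemma ennreal_inv_2pi_cube_mult:
  assumes "0 \<le> x"
  shows "ennreal inv_2pi ^ 3 * ennreal (2 * pi * x) = ennreal (inv_2pi\<^sup>2 * x)"
proof -
  have "ennreal inv_2pi ^ 3 * ennreal (2 * pi * x) = ennreal (inv_2pi ^ 3 * (2 * pi * x))"
    using assms by (subst ennreal_power) (auto simp flip: ennreal_mult)
  then show ?thesis
    by (simp add: power3_eq_cube power2_eq_square)
qed

lemma nn_integral_norm_mult_le:
  fixes F :: "real \<Rightarrow> complex" and g :: "real \<Rightarrow> ennreal"
  assumes F: "integrable lborel F" and m: "0 \<le> m" and g: "\<And>a. F a \<noteq> 0 \<Longrightarrow> g a \<le> ennreal m"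
  shows "(\<integral>\<^sup>+a. ennreal (norm (F a)) * g a \<partial>lborel) \<le> ennreal ((\<integral>a. norm (F a) \<partial>lborel) * m)"
proof -
  have "(\<integral>\<^sup>+a. ennreal (norm (F a)) * g a \<partial>lborel) \<le> (\<integral>\<^sup>+a. ennreal (norm (F a)) * ennreal m \<partial>lborel)"
    by (intro nn_integral_mono, case_tac "F x = 0") (auto intro: mult_left_mono g)
  also have "\<dots> = ennreal ((\<integral>a. norm (F a) \<partial>lborel) * m)"
    using F m by (simp add: nn_integral_multc nn_integral_norm_eq_integral ennreal_mult)
  finally show ?thesis .
qed

context
  fixes F G H :: "real \<Rightarrow> complex"
  assumes F: "integrable lborel F" and G: "integrable lborel G" and H: "integrable lborel H"
begin

lemma gauss_conv3_le_sup:
  assumes \<sigma>: "0 < \<sigma>" and F_le: "\<And>a. norm (F a) \<le> \<alpha>"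
  shows "gauss_conv3 F G H \<sigma> \<xi>
    \<le> ennreal (2 * pi * (\<alpha> * ((\<integral>b. norm (G b) \<partial>lborel) * (\<integral>c. norm (H c) \<partial>lborel))))"
proof -
  have \<alpha>: "0 \<le> \<alpha>"
    using F_le[of 0] norm_ge_zero order.trans by blast
  have conv1: "gauss_conv1 F \<sigma> \<zeta> \<le> ennreal (2 * pi * \<alpha>)" for \<zeta>
  proof -
    have "gauss_conv1 F \<sigma> \<zeta> \<le> (\<integral>\<^sup>+a. ennreal \<alpha> * ennreal (gauss_kernel \<sigma> (\<zeta> - a)) \<partial>lborel)"
      unfolding gauss_conv1_def by (intro nn_integral_mono mult_right_mono ennreal_leI F_le) auto
    also have "\<dots> = ennreal (2 * pi * \<alpha>)"
      using \<alpha> by (simp add: nn_integral_cmult nn_integral_gauss_kernel_shift[OF \<sigma>] ennreal_mult mult.commute)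
    finally show ?thesis .
  qed
  have conv2: "gauss_conv2 F G \<sigma> \<eta> \<le> ennreal ((\<integral>b. norm (G b) \<partial>lborel) * (2 * pi * \<alpha>))" for \<eta>
    unfolding gauss_conv2_def using \<alpha> by (intro nn_integral_norm_mult_le[OF G] conv1) simp
  have "gauss_conv3 F G H \<sigma> \<xi> \<le> ennreal ((\<integral>c. norm (H c) \<partial>lborel) * ((\<integral>b. norm (G b) \<partial>lborel) * (2 * pi * \<alpha>)))"
    unfolding gauss_conv3_def using \<alpha> by (intro nn_integral_norm_mult_le[OF H] conv2) simp
  then show ?thesis
    by (simp add: mult_ac)
qed

lemma nn_integral_gauss_conv3:
  assumes \<sigma>: "0 < \<sigma>"
  shows "(\<integral>\<^sup>+\<xi>. gauss_conv3 F G H \<sigma> \<xi> \<partial>lborel)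
    = ennreal (2 * pi * ((\<integral>a. norm (F a) \<partial>lborel) * ((\<integral>b. norm (G b) \<partial>lborel) * (\<integral>c. norm (H c) \<partial>lborel))))"
proof -
  have [measurable]: "F \<in> borel_measurable borel" "G \<in> borel_measurable borel" "H \<in> borel_measurable borel"
    using F G H by auto
  have "(\<integral>\<^sup>+\<zeta>. gauss_conv1 F \<sigma> \<zeta> \<partial>lborel)
      = (\<integral>\<^sup>+a. ennreal (norm (F a)) \<partial>lborel) * (\<integral>\<^sup>+y. ennreal (gauss_kernel \<sigma> y) \<partial>lborel)"
    unfolding gauss_conv1_def using nn_integral_conv[of "\<lambda>a. ennreal (norm (F a))" "\<lambda>y. ennreal (gauss_kernel \<sigma> y)" "-1"]
    by simp
  moreover have "(\<integral>\<^sup>+\<eta>. gauss_conv2 F G \<sigma> \<eta> \<partial>lborel)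
      = (\<integral>\<^sup>+b. ennreal (norm (G b)) \<partial>lborel) * (\<integral>\<^sup>+\<zeta>. gauss_conv1 F \<sigma> \<zeta> \<partial>lborel)"
    unfolding gauss_conv2_def using nn_integral_conv[of "\<lambda>b. ennreal (norm (G b))" "gauss_conv1 F \<sigma>" 1]
    by simp
  moreover have "(\<integral>\<^sup>+\<xi>. gauss_conv3 F G H \<sigma> \<xi> \<partial>lborel)
      = (\<integral>\<^sup>+c. ennreal (norm (H c)) \<partial>lborel) * (\<integral>\<^sup>+\<eta>. gauss_conv2 F G \<sigma> \<eta> \<partial>lborel)"
    unfolding gauss_conv3_def using nn_integral_conv[of "\<lambda>c. ennreal (norm (H c))" "gauss_conv2 F G \<sigma>" "-1"]
    by simp
  ultimately show ?thesis
    by (simp add: nn_integral_gauss_kernel[OF \<sigma>] nn_integral_norm_eq_integral F G H ennreal_mult' mult_ac)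
qed

lemma gauss_conv3_le_separated:
  assumes \<sigma>: "0 < \<sigma>" and \<delta>: "0 \<le> \<delta>"
    and F0: "\<And>a. a \<notin> S1 \<Longrightarrow> F a = 0" and G0: "\<And>b. b \<notin> S2 \<Longrightarrow> G b = 0"
    and H0: "\<And>c. c \<notin> S3 \<Longrightarrow> H c = 0"
    and far: "\<And>a b c. a \<in> S1 \<Longrightarrow> b \<in> S2 \<Longrightarrow> c \<in> S3 \<Longrightarrow> \<delta> \<le> \<bar>\<xi> - c + b - a\<bar>"
  shows "gauss_conv3 F G H \<sigma> \<xi> \<le> ennreal (\<sigma> * sqrt (2 * pi) * exp (- ((\<sigma> * \<delta>)\<^sup>2) / 2) *
     ((\<integral>a. norm (F a) \<partial>lborel) * ((\<integral>b. norm (G b) \<partial>lborel) * (\<integral>c. norm (H c) \<partial>lborel))))"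
proof -
  define m where "m = \<sigma> * sqrt (2 * pi) * exp (- ((\<sigma> * \<delta>)\<^sup>2) / 2)"
  have m: "0 \<le> m"
    unfolding m_def using \<sigma> by simp
  have conv1: "gauss_conv1 F \<sigma> (\<xi> - c + b) \<le> ennreal ((\<integral>a. norm (F a) \<partial>lborel) * m)"
    if b: "G b \<noteq> 0" and c: "H c \<noteq> 0" for b c
  proof -
    have "gauss_kernel \<sigma> (\<xi> - c + b - a) \<le> m" if "F a \<noteq> 0" for a
      unfolding m_def using F0 G0 H0 b c that by (blast intro: gauss_kernel_le_tail[OF \<sigma> \<delta>] far)
    then show ?thesis
      unfolding gauss_conv1_def using m by (intro nn_integral_norm_mult_le[OF F] ennreal_leI)
  qed
  have conv2: "gauss_conv2 F G \<sigma> (\<xi> - c) \<le> ennreal ((\<integral>b. norm (G b) \<partial>lborel) * ((\<integral>a. norm (F a) \<partial>lborel) * m))"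
    if "H c \<noteq> 0" for c
    unfolding gauss_conv2_def using m that by (intro nn_integral_norm_mult_le[OF G] conv1) simp_all
  have "gauss_conv3 F G H \<sigma> \<xi>
      \<le> ennreal ((\<integral>c. norm (H c) \<partial>lborel) * ((\<integral>b. norm (G b) \<partial>lborel) * ((\<integral>a. norm (F a) \<partial>lborel) * m)))"
    unfolding gauss_conv3_def using m by (intro nn_integral_norm_mult_le[OF H] conv2) simp_all
  then show ?thesis
    unfolding m_def by (simp add: mult_ac)
qed

text \<open>A non-integrable cubic product has Fourier transform \<open>0\<close> (the Bochner integral's junk
  value), so the bound is trivial then; otherwise the Gaussian regularisations converge to it.\<close>

lemma ennreal_norm_ft_ift_cubic_le_liminf:
  "ennreal (norm (ft (ift_cubic F G H) \<xi>))
    \<le> liminf (\<lambda>n. ennreal inv_2pi ^ 3 * gauss_conv3 F G H (real n + 1) \<xi>)"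
proof (cases "integrable lborel (ift_cubic F G H)")
  case True
  have "liminf (\<lambda>n. ennreal (norm (ft (\<lambda>x. complex_of_real (gauss_window (real n + 1) x) * ift_cubic F G H x) \<xi>)))
      = ennreal (norm (ft (ift_cubic F G H) \<xi>))"
    by (intro lim_imp_Liminf tendsto_ennrealI tendsto_norm tendsto_ft_regularised True) simp
  moreover have "liminf (\<lambda>n. ennreal (norm (ft (\<lambda>x. complex_of_real (gauss_window (real n + 1) x) * ift_cubic F G H x) \<xi>)))
      \<le> liminf (\<lambda>n. ennreal inv_2pi ^ 3 * gauss_conv3 F G H (real n + 1) \<xi>)"
    by (intro Liminf_mono always_eventually allI norm_ft_regularised_ift_cubic_le F G H) simp
  ultimately show ?thesis
    by simp
next
  case False
  have [measurable]: "F \<in> borel_measurable borel" "G \<in> borel_measurable borel" "H \<in> borel_measurable borel"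
    using F G H by auto
  show ?thesis
    using False by (simp add: ft_eq_0_if_not_integrable)
qed

lemma norm_ft_ift_cubic_le:
  assumes F_le: "\<And>a. norm (F a) \<le> \<alpha>"
  shows "norm (ft (ift_cubic F G H) \<xi>)
    \<le> inv_2pi\<^sup>2 * (\<alpha> * ((\<integral>b. norm (G b) \<partial>lborel) * (\<integral>c. norm (H c) \<partial>lborel)))"
proof -
  define B where "B = \<alpha> * ((\<integral>b. norm (G b) \<partial>lborel) * (\<integral>c. norm (H c) \<partial>lborel))"
  have "0 \<le> \<alpha>"
    using F_le[of 0] norm_ge_zero order.trans by blast
  then have B: "0 \<le> B"
    unfolding B_def by simp
  have "ennreal inv_2pi ^ 3 * gauss_conv3 F G H (real n + 1) \<xi> \<le> ennreal (inv_2pi\<^sup>2 * B)" for n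
  proof -
    have "gauss_conv3 F G H (real n + 1) \<xi> \<le> ennreal (2 * pi * B)"
      unfolding B_def by (rule gauss_conv3_le_sup) (auto intro: F_le)
    then show ?thesis
      unfolding ennreal_inv_2pi_cube_mult[OF B, symmetric] by (rule mult_left_mono) simp
  qed
  then have "liminf (\<lambda>n. ennreal inv_2pi ^ 3 * gauss_conv3 F G H (real n + 1) \<xi>)
      \<le> liminf (\<lambda>_. ennreal (inv_2pi\<^sup>2 * B))"
    by (intro Liminf_mono always_eventually allI)
  then have "ennreal (norm (ft (ift_cubic F G H) \<xi>)) \<le> ennreal (inv_2pi\<^sup>2 * B)"
    using ennreal_norm_ft_ift_cubic_le_liminf[of \<xi>] by (simp add: Liminf_const)
  then show ?thesis
    using B by (simp add: B_def ennreal_le_iff)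
qed

lemma nn_integral_norm_ft_ift_cubic_le:
  "(\<integral>\<^sup>+\<xi>. ennreal (norm (ft (ift_cubic F G H) \<xi>)) \<partial>lborel)
    \<le> ennreal (inv_2pi\<^sup>2 * ((\<integral>a. norm (F a) \<partial>lborel) * ((\<integral>b. norm (G b) \<partial>lborel) * (\<integral>c. norm (H c) \<partial>lborel))))"
proof -
  have [measurable]: "F \<in> borel_measurable borel" "G \<in> borel_measurable borel" "H \<in> borel_measurable borel"
    using F G H by auto
  define B where "B = (\<integral>a. norm (F a) \<partial>lborel) * ((\<integral>b. norm (G b) \<partial>lborel) * (\<integral>c. norm (H c) \<partial>lborel))"
  have B: "0 \<le> B"
    unfolding B_def by simp
  have "(\<integral>\<^sup>+\<xi>. ennreal (norm (ft (ift_cubic F G H) \<xi>)) \<partial>lborel)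
      \<le> (\<integral>\<^sup>+\<xi>. liminf (\<lambda>n. ennreal inv_2pi ^ 3 * gauss_conv3 F G H (real n + 1) \<xi>) \<partial>lborel)"
    by (intro nn_integral_mono ennreal_norm_ft_ift_cubic_le_liminf)
  also have "\<dots> \<le> liminf (\<lambda>n. \<integral>\<^sup>+\<xi>. ennreal inv_2pi ^ 3 * gauss_conv3 F G H (real n + 1) \<xi> \<partial>lborel)"
    by (rule nn_integral_liminf) simp
  also have "\<dots> = liminf (\<lambda>_. ennreal (inv_2pi\<^sup>2 * B))"
    by (simp add: nn_integral_cmult nn_integral_gauss_conv3 B_def[symmetric] ennreal_inv_2pi_cube_mult B)
  finally show ?thesis
    by (simp add: Liminf_const B_def)
qed

lemma ft_ift_cubic_eq_0_if_separated:
  assumes \<delta>: "0 < \<delta>"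
    and F0: "\<And>a. a \<notin> S1 \<Longrightarrow> F a = 0" and G0: "\<And>b. b \<notin> S2 \<Longrightarrow> G b = 0"
    and H0: "\<And>c. c \<notin> S3 \<Longrightarrow> H c = 0"
    and far: "\<And>a b c. a \<in> S1 \<Longrightarrow> b \<in> S2 \<Longrightarrow> c \<in> S3 \<Longrightarrow> \<delta> \<le> \<bar>\<xi> - c + b - a\<bar>"
  shows "ft (ift_cubic F G H) \<xi> = 0"
proof -
  define B where "B = (\<integral>a. norm (F a) \<partial>lborel) * ((\<integral>b. norm (G b) \<partial>lborel) * (\<integral>c. norm (H c) \<partial>lborel))"
  define m where "m n = (real n + 1) * sqrt (2 * pi) * exp (- (((real n + 1) * \<delta>)\<^sup>2) / 2)" for n
  have nonneg: "0 \<le> B" "0 \<le> m n" for n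
    unfolding B_def m_def by simp_all
  have "ennreal inv_2pi ^ 3 * gauss_conv3 F G H (real n + 1) \<xi> \<le> ennreal (inv_2pi ^ 3 * (m n * B))" for n
  proof -
    have "gauss_conv3 F G H (real n + 1) \<xi> \<le> ennreal (m n * B)"
      unfolding m_def B_def using \<delta> by (intro gauss_conv3_le_separated[OF _ _ F0 G0 H0 far]) auto
    then show ?thesis
      using nonneg by (simp add: ennreal_power ennreal_mult mult_left_mono)
  qed
  then have "liminf (\<lambda>n. ennreal inv_2pi ^ 3 * gauss_conv3 F G H (real n + 1) \<xi>)
      \<le> liminf (\<lambda>n. ennreal (inv_2pi ^ 3 * (m n * B)))"
    by (intro Liminf_mono always_eventually allI)
  also have "\<dots> = 0"
  proof (intro lim_imp_Liminf)
    have "(\<lambda>n. m n) \<longlonglongrightarrow> 0"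
      unfolding m_def using \<delta> by real_asymp
    then have "(\<lambda>n. inv_2pi ^ 3 * (m n * B)) \<longlonglongrightarrow> inv_2pi ^ 3 * (0 * B)"
      by (intro tendsto_intros)
    then have "(\<lambda>n. ennreal (inv_2pi ^ 3 * (m n * B))) \<longlonglongrightarrow> ennreal (inv_2pi ^ 3 * (0 * B))"
      by (rule tendsto_ennrealI)
    then show "(\<lambda>n. ennreal (inv_2pi ^ 3 * (m n * B))) \<longlonglongrightarrow> 0"
      by simp
  qed simp
  finally show ?thesis
    using ennreal_norm_ft_ift_cubic_le_liminf[of \<xi>] by simp
qed

end


section \<open>Compositions and weights\<close>

definition compositions3 :: "nat \<Rightarrow> (nat \<times> nat \<times> nat) set" where
  "compositions3 k = {(a, b, c). a + b + c = k \<and> 1 \<le> a \<and> 1 \<le> b \<and> 1 \<le> c}"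

lemma compositions3_subset: "compositions3 k \<subseteq> {1..k} \<times> {1..k} \<times> {1..k}"
  unfolding compositions3_def by auto

lemma finite_compositions3 [simp]: "finite (compositions3 k)"
  by (rule finite_subset[OF compositions3_subset]) auto

lemma compositions3_2: "compositions3 2 = {}"
  unfolding compositions3_def by auto

lemma compositions3_ge_3: "q \<in> compositions3 k \<Longrightarrow> 3 \<le> k"
  by (auto simp: compositions3_def)

lemma sum_inverse_squares_le: "(\<Sum>i=1..m. 1 / (real i)\<^sup>2) \<le> 2"
proof -
  have telescoping: "(\<Sum>i=1..m. 1 / (real i)\<^sup>2) \<le> 2 - 1 / real m" if "1 \<le> m" for m
    using that
  proof (induction m rule: dec_induct)
    case (step m)
    have m: "1 \<le> real m"
      using step by simp
    have "1 / (real m + 1)\<^sup>2 \<le> 1 / (real m * (real m + 1))"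
      using m by (intro frac_le) (auto simp: power2_eq_square)
    also have "\<dots> = 1 / real m - 1 / (real m + 1)"
      using m by (simp add: field_simps)
    finally show ?case
      using step.IH by (simp add: add.commute)
  qed simp
  show ?thesis
    using telescoping[of m] by (cases "m = 0") (auto intro: order.trans)
qed

lemma sum_compositions3_pair_le:
  assumes inj: "inj_on p (compositions3 k)" and sub: "p ` compositions3 k \<subseteq> {1..k} \<times> {1..k}"
  shows "(\<Sum>x\<in>compositions3 k. 1 / (real (fst (p x)) * real (snd (p x)))\<^sup>2) \<le> 4"
proof -
  have "(\<Sum>x\<in>compositions3 k. 1 / (real (fst (p x)) * real (snd (p x)))\<^sup>2)
      = (\<Sum>y\<in>p ` compositions3 k. 1 / (real (fst y) * real (snd y))\<^sup>2)"
    using sum.reindex[OF inj, of "\<lambda>y. 1 / (real (fst y) * real (snd y))\<^sup>2"] by simp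
  also have "\<dots> \<le> (\<Sum>y\<in>{1..k} \<times> {1..k}. 1 / (real (fst y) * real (snd y))\<^sup>2)"
    by (rule sum_mono2[OF _ sub]) auto
  also have "\<dots> = (\<Sum>i=1..k. 1 / (real i)\<^sup>2) * (\<Sum>j=1..k. 1 / (real j)\<^sup>2)"
    by (simp add: sum_product sum.cartesian_product power_mult_distrib split_def)
  also have "\<dots> \<le> 2 * 2"
    by (intro mult_mono sum_inverse_squares_le) (auto intro: sum_nonneg)
  finally show ?thesis
    by simp
qed

lemma inverse_square_triple_le:
  fixes a b c :: real
  assumes "0 < a" "0 < b" "0 < c"
  shows "1 / (a * b * c)\<^sup>2 \<le> 3 / (a + b + c)\<^sup>2 * (1 / (b * c)\<^sup>2 + 1 / (a * c)\<^sup>2 + 1 / (a * b)\<^sup>2)"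
proof -
  have "0 \<le> (a - b)\<^sup>2 + (b - c)\<^sup>2 + (a - c)\<^sup>2"
    by simp
  then have "(a + b + c)\<^sup>2 \<le> 3 * (a\<^sup>2 + b\<^sup>2 + c\<^sup>2)"
    by (simp add: power2_eq_square algebra_simps)
  then have "1 \<le> 3 * (a\<^sup>2 + b\<^sup>2 + c\<^sup>2) / (a + b + c)\<^sup>2"
    using assms by simp
  from mult_right_mono[OF this, of "1 / (a * b * c)\<^sup>2"]
  have "1 / (a * b * c)\<^sup>2 \<le> 3 * (a\<^sup>2 + b\<^sup>2 + c\<^sup>2) / (a + b + c)\<^sup>2 * (1 / (a * b * c)\<^sup>2)"
    by simp
  also have "\<dots> = 3 / (a + b + c)\<^sup>2 * (1 / (b * c)\<^sup>2 + 1 / (a * c)\<^sup>2 + 1 / (a * b)\<^sup>2)"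
    using assms by (simp add: field_simps power2_eq_square)
  finally show ?thesis .
qed

lemma sum_compositions3_inverse_square_le:
  "(\<Sum>(a, b, c)\<in>compositions3 k. 1 / (real a * real b * real c)\<^sup>2) \<le> 36 / (real k)\<^sup>2"
proof -
  have "(\<Sum>(a, b, c)\<in>compositions3 k. 1 / (real a * real b * real c)\<^sup>2)
      \<le> (\<Sum>(a, b, c)\<in>compositions3 k. 3 / (real k)\<^sup>2 *
          (1 / (real b * real c)\<^sup>2 + 1 / (real a * real c)\<^sup>2 + 1 / (real a * real b)\<^sup>2))"
    using inverse_square_triple_le by (intro sum_mono) (auto simp: compositions3_def)
  also have "\<dots> = 3 / (real k)\<^sup>2 *
      ((\<Sum>x\<in>compositions3 k. 1 / (real (fst (snd x)) * real (snd (snd x)))\<^sup>2)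
     + (\<Sum>x\<in>compositions3 k. 1 / (real (fst x) * real (snd (snd x)))\<^sup>2)
     + (\<Sum>x\<in>compositions3 k. 1 / (real (fst x) * real (fst (snd x)))\<^sup>2))"
    by (simp only: sum.distrib[symmetric] sum_distrib_left split_def)
  also have "\<dots> \<le> 3 / (real k)\<^sup>2 * (4 + 4 + 4)"
  proof -
    have pair: "(\<Sum>x\<in>compositions3 k. 1 / (real (fst (p x)) * real (snd (p x)))\<^sup>2) \<le> 4"
      if "p \<in> {\<lambda>x. (fst (snd x), snd (snd x)), \<lambda>x. (fst x, snd (snd x)), \<lambda>x. (fst x, fst (snd x))}" for p
      using that by (intro sum_compositions3_pair_le) (auto simp: inj_on_def compositions3_def)
    show ?thesis
      using pair[of "\<lambda>x. (fst (snd x), snd (snd x))"] pair[of "\<lambda>x. (fst x, snd (snd x))"]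
        pair[of "\<lambda>x. (fst x, fst (snd x))"]
      by (intro mult_left_mono add_mono) auto
  qed
  finally show ?thesis
    by simp
qed

definition iterate_weight :: "nat \<Rightarrow> real" where
  "iterate_weight k = 2 * 4 ^ (k - 1) / (real k)\<^sup>2"

lemma iterate_weight_nonneg: "0 \<le> iterate_weight k"
  unfolding iterate_weight_def by simp

lemma inv_2pi_squared_le: "inv_2pi\<^sup>2 \<le> 1 / 36"
proof -
  have "9 \<le> pi\<^sup>2"
    using pi_gt3 power_mono[of 3 pi 2] by simp
  then show ?thesis
    by (simp add: power_divide power_mult_distrib)
qed

definition composition_weight :: "nat \<times> nat \<times> nat \<Rightarrow> real" where
  "composition_weight q = inv_2pi\<^sup>2 * (iterate_weight (fst q) * (iterate_weight (fst (snd q)) * iterate_weight (snd (snd q))))"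

lemma composition_weight_nonneg: "0 \<le> composition_weight q"
  unfolding composition_weight_def by (simp add: iterate_weight_nonneg)

lemma sum_composition_weight_le:
  assumes k: "3 \<le> k"
  shows "(\<Sum>q\<in>compositions3 k. composition_weight q) \<le> iterate_weight k"
proof -
  define w where "w = inv_2pi\<^sup>2 * 8 * 4 ^ (k - 3)"
  have term_eq: "composition_weight q = w * (1 / (real (fst q) * real (fst (snd q)) * real (snd (snd q)))\<^sup>2)"
    if "q \<in> compositions3 k" for q
  proof -
    from that have "(fst q - 1) + ((fst (snd q) - 1) + (snd (snd q) - 1)) = k - 3"
      by (auto simp: compositions3_def)
    then have "(4::real) ^ (fst q - 1) * (4 ^ (fst (snd q) - 1) * 4 ^ (snd (snd q) - 1)) = 4 ^ (k - 3)"
      by (metis power_add)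
    then show ?thesis
      unfolding composition_weight_def iterate_weight_def w_def by (simp add: field_simps power_mult_distrib)
  qed
  have "(\<Sum>q\<in>compositions3 k. composition_weight q)
      = w * (\<Sum>(a, b, c)\<in>compositions3 k. 1 / (real a * real b * real c)\<^sup>2)"
    by (simp add: sum_distrib_left split_def term_eq cong: sum.cong)
  also have "\<dots> \<le> w * (36 / (real k)\<^sup>2)"
    unfolding w_def by (intro mult_left_mono sum_compositions3_inverse_square_le) auto
  also have "\<dots> \<le> (1 / 36) * 8 * 4 ^ (k - 3) * (36 / (real k)\<^sup>2)"
    unfolding w_def by (intro mult_right_mono inv_2pi_squared_le) auto
  also have "\<dots> \<le> iterate_weight k"
  proof -
    have "k - 1 = 2 + (k - 3)"
      using k by simp
    then have "(4::real) ^ (k - 1) = 16 * 4 ^ (k - 3)"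
      by (simp add: power_add)
    then show ?thesis
      unfolding iterate_weight_def by (simp add: divide_right_mono)
  qed
  finally show ?thesis .
qed

section \<open>The Picard iterates\<close>

(* the defining equation of Uhat would otherwise be unfolded indefinitely by simp *)
declare Uhat.simps [simp del]

lemma Uhat_0: "Uhat \<mu> ph 0 t \<xi> = 0"
  by (subst Uhat.simps) simp

lemma Uhat_1: "Uhat \<mu> ph 1 t \<xi> = cis (- (t * \<bar>\<xi>\<bar>)) * ph \<xi>"
  by (subst Uhat.simps) simp

definition duhamel_term :: "real \<Rightarrow> (real \<Rightarrow> complex) \<Rightarrow> nat \<times> nat \<times> nat \<Rightarrow> real \<Rightarrow> real \<Rightarrow> complex" where
  "duhamel_term \<mu> ph q t \<xi> = (LINT \<tau>:{0..t}|lborel. cis (- ((t - \<tau>) * \<bar>\<xi>\<bar>)) *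
     ft (ift_cubic (Uhat \<mu> ph (fst q) \<tau>) (Uhat \<mu> ph (fst (snd q)) \<tau>) (Uhat \<mu> ph (snd (snd q)) \<tau>)) \<xi>)"

lemma Uhat_rec:
  "2 \<le> k \<Longrightarrow> Uhat \<mu> ph k t \<xi> = - \<i> * complex_of_real \<mu> * (\<Sum>q\<in>compositions3 k. duhamel_term \<mu> ph q t \<xi>)"
  by (subst Uhat.simps) (simp add: compositions3_def duhamel_term_def ift_cubic_def[abs_def] split_def)

lemma Uhat_2: "Uhat \<mu> ph 2 t \<xi> = 0"
  by (simp add: Uhat_rec compositions3_2)

lemma ift_pair_measurable [measurable]:
  assumes [measurable]: "case_prod P \<in> borel_measurable (borel \<Otimes>\<^sub>M borel)"
  shows "(\<lambda>(\<tau>, x). ift (P \<tau>) x) \<in> borel_measurable (borel \<Otimes>\<^sub>M borel)"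
  unfolding ift_def by measurable

lemma ft_ift_cubic_pair_measurable [measurable]:
  assumes [measurable]: "case_prod P \<in> borel_measurable (borel \<Otimes>\<^sub>M borel)"
    "case_prod Q \<in> borel_measurable (borel \<Otimes>\<^sub>M borel)" "case_prod S \<in> borel_measurable (borel \<Otimes>\<^sub>M borel)"
  shows "(\<lambda>(\<tau>, \<xi>). ft (ift_cubic (P \<tau>) (Q \<tau>) (S \<tau>)) \<xi>) \<in> borel_measurable (borel \<Otimes>\<^sub>M borel)"
  unfolding ft_def ift_cubic_def by measurable

lemma set_integral_Icc_eq:
  "(LINT \<tau>:{0..t}|lborel. g \<tau>) = (LINT \<tau>|lborel. (if 0 \<le> \<tau> \<and> \<tau> \<le> t then g \<tau> else 0))"
  unfolding set_lebesgue_integral_def by (rule Bochner_Integration.integral_cong) (auto simp: indicator_def)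

lemma duhamel_term_measurable [measurable]:
  assumes [measurable]: "case_prod (Uhat \<mu> ph (fst q)) \<in> borel_measurable (borel \<Otimes>\<^sub>M borel)"
    "case_prod (Uhat \<mu> ph (fst (snd q))) \<in> borel_measurable (borel \<Otimes>\<^sub>M borel)"
    "case_prod (Uhat \<mu> ph (snd (snd q))) \<in> borel_measurable (borel \<Otimes>\<^sub>M borel)"
  shows "case_prod (duhamel_term \<mu> ph q) \<in> borel_measurable (borel \<Otimes>\<^sub>M borel)"
  unfolding duhamel_term_def[abs_def] set_integral_Icc_eq by measurable

lemma Uhat_measurable:
  assumes [measurable]: "ph \<in> borel_measurable borel"
  shows "case_prod (Uhat \<mu> ph k) \<in> borel_measurable (borel \<Otimes>\<^sub>M borel)"
proof (induction k rule: less_induct)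
  case (less k)
  consider "k = 0" | "k = 1" | "2 \<le> k"
    by linarith
  then show ?case
  proof cases
    case 1
    then show ?thesis
      by (simp add: Uhat_0[abs_def])
  next
    case 2
    have "case_prod (Uhat \<mu> ph 1) = (\<lambda>p. cis (- (fst p * \<bar>snd p\<bar>)) * ph (snd p))"
      unfolding split_def by (rule ext) (rule Uhat_1)
    also have "\<dots> \<in> borel_measurable (borel \<Otimes>\<^sub>M borel)"
      by measurable
    finally show ?thesis
      using 2 by simp
  next
    case 3
    have "case_prod (Uhat \<mu> ph k)
        = (\<lambda>p. - \<i> * complex_of_real \<mu> * (\<Sum>q\<in>compositions3 k. case_prod (duhamel_term \<mu> ph q) p))"
      using 3 by (simp add: fun_eq_iff Uhat_rec)
    also have "\<dots> \<in> borel_measurable (borel \<Otimes>\<^sub>M borel)"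
    proof (intro borel_measurable_times borel_measurable_const borel_measurable_sum)
      fix q assume "q \<in> compositions3 k"
      then show "case_prod (duhamel_term \<mu> ph q) \<in> borel_measurable (borel \<Otimes>\<^sub>M borel)"
        by (intro duhamel_term_measurable less) (auto simp: compositions3_def)
    qed
    finally show ?thesis .
  qed
qed

lemma Uhat_measurable_at [measurable]:
  assumes [measurable]: "ph \<in> borel_measurable borel"
  shows "Uhat \<mu> ph k t \<in> borel_measurable borel"
proof -
  have [measurable]: "case_prod (Uhat \<mu> ph k) \<in> borel_measurable (borel \<Otimes>\<^sub>M borel)"
    by (rule Uhat_measurable) simp
  show ?thesis
    by measurable
qed

lemma norm_set_integral_Icc_le:
  fixes g :: "real \<Rightarrow> complex"
  assumes t: "0 \<le> t" and g: "\<And>\<tau>. 0 \<le> \<tau> \<Longrightarrow> \<tau> \<le> t \<Longrightarrow> norm (g \<tau>) \<le> B"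
  shows "norm (LINT \<tau>:{0..t}|lborel. g \<tau>) \<le> B * t"
proof -
  have B: "0 \<le> B"
    using g[of 0] t norm_ge_zero order.trans by blast
  have "ennreal (norm (LINT \<tau>:{0..t}|lborel. g \<tau>)) \<le> (\<integral>\<^sup>+\<tau>. ennreal (norm (indicator {0..t} \<tau> *\<^sub>R g \<tau>)) \<partial>lborel)"
    unfolding set_lebesgue_integral_def by (rule ennreal_norm_integral_le)
  also have "\<dots> \<le> (\<integral>\<^sup>+\<tau>. ennreal B * indicator {0..t} \<tau> \<partial>lborel)"
    by (intro nn_integral_mono) (auto simp: indicator_def g intro!: ennreal_leI)
  also have "\<dots> = ennreal (B * t)"
    using t B by (simp add: nn_integral_cmult_indicator ennreal_mult)
  finally show ?thesis
    using B t by (simp add: ennreal_le_iff)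
qed

lemma nn_integral_norm_set_integral_Icc_le:
  fixes g :: "real \<Rightarrow> real \<Rightarrow> complex"
  assumes t: "0 \<le> t" and [measurable]: "case_prod g \<in> borel_measurable (borel \<Otimes>\<^sub>M borel)"
    and g: "\<And>\<tau>. 0 \<le> \<tau> \<Longrightarrow> \<tau> \<le> t \<Longrightarrow> (\<integral>\<^sup>+\<xi>. ennreal (norm (g \<tau> \<xi>)) \<partial>lborel) \<le> ennreal B"
    and B: "0 \<le> B"
  shows "(\<integral>\<^sup>+\<xi>. ennreal (norm (LINT \<tau>:{0..t}|lborel. g \<tau> \<xi>)) \<partial>lborel) \<le> ennreal (B * t)"
proof -
  have "(\<integral>\<^sup>+\<xi>. ennreal (norm (LINT \<tau>:{0..t}|lborel. g \<tau> \<xi>)) \<partial>lborel)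
      \<le> (\<integral>\<^sup>+\<xi>. (\<integral>\<^sup>+\<tau>. indicator {0..t} \<tau> * ennreal (norm (g \<tau> \<xi>)) \<partial>lborel) \<partial>lborel)"
    unfolding set_lebesgue_integral_def
    by (intro nn_integral_mono order.trans[OF ennreal_norm_integral_le]) (auto simp: indicator_def)
  also have "\<dots> = (\<integral>\<^sup>+\<tau>. (\<integral>\<^sup>+\<xi>. indicator {0..t} \<tau> * ennreal (norm (g \<tau> \<xi>)) \<partial>lborel) \<partial>lborel)"
    by (rule lborel_pair.Fubini') measurable
  also have "\<dots> = (\<integral>\<^sup>+\<tau>. indicator {0..t} \<tau> * (\<integral>\<^sup>+\<xi>. ennreal (norm (g \<tau> \<xi>)) \<partial>lborel) \<partial>lborel)"
    by (subst nn_integral_cmult) auto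
  also have "\<dots> \<le> (\<integral>\<^sup>+\<tau>. ennreal B * indicator {0..t} \<tau> \<partial>lborel)"
    by (intro nn_integral_mono) (auto simp: indicator_def g mult.commute)
  also have "\<dots> = ennreal (B * t)"
    using t B by (simp add: nn_integral_cmult_indicator ennreal_mult)
  finally show ?thesis .
qed


section \<open>Frequency localisation and bounds on the iterates\<close>

definition freq_support :: "real \<Rightarrow> real \<Rightarrow> nat \<Rightarrow> real set" where
  "freq_support N A k = {\<xi>. \<exists>j::int. \<bar>j\<bar> \<le> 2 * int k \<and> \<bar>\<xi> - of_int j * N\<bar> \<le> (real k - 1/2) * A}"

lemma freq_support_eq_Union:
  "freq_support N A k = (\<Union>j\<in>{- 2 * int k .. 2 * int k}.
     {of_int j * N - (real k - 1/2) * A .. of_int j * N + (real k - 1/2) * A})"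
  unfolding freq_support_def by (auto simp: abs_le_iff intro!: bexI) (auto simp: abs_le_iff)

lemma freq_support_sets [measurable]: "freq_support N A k \<in> sets borel"
  unfolding freq_support_eq_Union by auto

lemma freq_support_separated:
  assumes q: "(k1, k2, k3) \<in> compositions3 k" and \<xi>: "\<xi> \<notin> freq_support N A k"
    and a: "a \<in> freq_support N A k1" and b: "b \<in> freq_support N A k2" and c: "c \<in> freq_support N A k3"
  shows "A \<le> \<bar>\<xi> - c + b - a\<bar>"
proof -
  from q have k: "k1 + k2 + k3 = k"
    by (auto simp: compositions3_def)
  obtain j1 where j1: "\<bar>j1\<bar> \<le> 2 * int k1" "\<bar>a - of_int j1 * N\<bar> \<le> (real k1 - 1/2) * A"
    using a unfolding freq_support_def by auto
  obtain j2 where j2: "\<bar>j2\<bar> \<le> 2 * int k2" "\<bar>b - of_int j2 * N\<bar> \<le> (real k2 - 1/2) * A"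
    using b unfolding freq_support_def by auto
  obtain j3 where j3: "\<bar>j3\<bar> \<le> 2 * int k3" "\<bar>c - of_int j3 * N\<bar> \<le> (real k3 - 1/2) * A"
    using c unfolding freq_support_def by auto
  define j where "j = j1 - j2 + j3"
  have "\<bar>j\<bar> \<le> 2 * int k"
    unfolding j_def using j1 j2 j3 k by linarith
  then have far: "(real k - 1/2) * A < \<bar>\<xi> - of_int j * N\<bar>"
    using \<xi> unfolding freq_support_def by force
  have "a - b + c - of_int j * N = (a - of_int j1 * N) - (b - of_int j2 * N) + (c - of_int j3 * N)"
    unfolding j_def by (simp add: algebra_simps)
  then have "\<bar>a - b + c - of_int j * N\<bar> \<le> (real k1 - 1/2) * A + (real k2 - 1/2) * A + (real k3 - 1/2) * A"
    using j1 j2 j3 by (smt (verit))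
  also have "\<dots> = (real k - 1/2) * A - A"
    unfolding k[symmetric] by (simp add: algebra_simps)
  finally show ?thesis
    using far by (smt (verit))
qed

lemma phi_hat_measurable [measurable]: "phi_hat R N A \<in> borel_measurable borel"
  unfolding phi_hat_def by measurable

lemma norm_phi_hat:
  "0 < R \<Longrightarrow> norm (phi_hat R N A \<xi>)
    = R * (indicator {N - A/2 ..< N + A/2} \<xi> + indicator {2*N - A/2 ..< 2*N + A/2} \<xi>)"
  unfolding phi_hat_def by (simp add: indicator_def)

lemma norm_phi_hat_le: "0 < R \<Longrightarrow> norm (phi_hat R N A \<xi>) \<le> 2 * R"
  unfolding norm_phi_hat by (auto simp: indicator_def)

lemma integrable_phi_hat:
  assumes R: "0 < R" and A: "0 < A"
  shows "integrable lborel (phi_hat R N A)" and "(\<integral>\<xi>. norm (phi_hat R N A \<xi>) \<partial>lborel) = 2 * R * A"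
proof -
  have "(\<integral>\<^sup>+\<xi>. ennreal (norm (phi_hat R N A \<xi>)) \<partial>lborel)
     = (\<integral>\<^sup>+\<xi>. ennreal R * indicator {N - A/2 ..< N + A/2} \<xi>
          + ennreal R * indicator {2*N - A/2 ..< 2*N + A/2} \<xi> \<partial>lborel)"
    using R by (intro nn_integral_cong)
      (auto simp: norm_phi_hat indicator_def ennreal_plus[symmetric] simp del: ennreal_plus)
  also have "\<dots> = ennreal (2 * R * A)"
    using R A by (simp add: nn_integral_add nn_integral_cmult_indicator ennreal_mult[symmetric]
        ennreal_plus[symmetric] del: ennreal_plus)
  finally have nn: "(\<integral>\<^sup>+\<xi>. ennreal (norm (phi_hat R N A \<xi>)) \<partial>lborel) = ennreal (2 * R * A)" .
  then show integrable: "integrable lborel (phi_hat R N A)"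
    by (intro integrableI_bounded) auto
  show "(\<integral>\<xi>. norm (phi_hat R N A \<xi>) \<partial>lborel) = 2 * R * A"
    using nn R A by (simp add: nn_integral_norm_eq_integral[OF integrable])
qed

lemma phi_hat_eq_0:
  assumes "\<xi> \<notin> freq_support N A 1"
  shows "phi_hat R N A \<xi> = 0"
proof -
  have member: "\<xi> \<in> freq_support N A 1"
    if "\<bar>j\<bar> \<le> 2" "of_int j * N - A / 2 \<le> \<xi>" "\<xi> \<le> of_int j * N + A / 2" for j :: int
    unfolding freq_support_def using that by (intro CollectI exI[of _ j]) (auto simp: abs_if)
  show ?thesis
    using assms member[of 1] member[of 2] unfolding phi_hat_def by (auto simp: indicator_def)
qed

definition sup_bound :: "real \<Rightarrow> real \<Rightarrow> nat \<Rightarrow> real \<Rightarrow> real" where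
  "sup_bound R A k t = iterate_weight k * R ^ k * A ^ (k - 1) * sqrt t ^ (k - 1)"

definition L1_bound :: "real \<Rightarrow> real \<Rightarrow> nat \<Rightarrow> real \<Rightarrow> real" where
  "L1_bound R A k t = iterate_weight k * R ^ k * A ^ k * sqrt t ^ (k - 1)"

definition iterate_bounds :: "real \<Rightarrow> real \<Rightarrow> real \<Rightarrow> real \<Rightarrow> nat \<Rightarrow> real \<Rightarrow> bool" where
  "iterate_bounds \<mu> R N A k t \<longleftrightarrow>
     integrable lborel (Uhat \<mu> (phi_hat R N A) k t) \<and>
     (\<forall>\<xi>. norm (Uhat \<mu> (phi_hat R N A) k t \<xi>) \<le> sup_bound R A k t) \<and>
     (\<integral>\<xi>. norm (Uhat \<mu> (phi_hat R N A) k t \<xi>) \<partial>lborel) \<le> L1_bound R A k t \<and>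
     (\<forall>\<xi>. \<xi> \<notin> freq_support N A k \<longrightarrow> Uhat \<mu> (phi_hat R N A) k t \<xi> = 0)"

lemma sup_bound_nonneg: "0 \<le> R \<Longrightarrow> 0 \<le> A \<Longrightarrow> 0 \<le> t \<Longrightarrow> 0 \<le> sup_bound R A k t"
  unfolding sup_bound_def by (simp add: iterate_weight_nonneg)

lemma L1_bound_nonneg: "0 \<le> R \<Longrightarrow> 0 \<le> A \<Longrightarrow> 0 \<le> t \<Longrightarrow> 0 \<le> L1_bound R A k t"
  unfolding L1_bound_def by (simp add: iterate_weight_nonneg)

lemma bound_products:
  assumes "q \<in> compositions3 k"
  shows "inv_2pi\<^sup>2 * (sup_bound R A (fst q) t * (L1_bound R A (fst (snd q)) t * L1_bound R A (snd (snd q)) t))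
      = composition_weight q * (R ^ k * A ^ (k - 1) * sqrt t ^ (k - 3))"
    and "inv_2pi\<^sup>2 * (L1_bound R A (fst q) t * (L1_bound R A (fst (snd q)) t * L1_bound R A (snd (snd q)) t))
      = composition_weight q * (R ^ k * A ^ k * sqrt t ^ (k - 3))"
proof -
  obtain k1 k2 k3 where q: "q = (k1, k2, k3)"
    by (cases q) auto
  from assms have "k1 + k2 + k3 = k" "1 \<le> k1" "1 \<le> k2" "1 \<le> k3"
    by (auto simp: q compositions3_def)
  then have "k = k1 + (k2 + k3)" "k - 1 = (k1 - 1) + (k2 + k3)" "k - 3 = (k1 - 1) + ((k2 - 1) + (k3 - 1))"
    by simp_all
  then have "R ^ k = R ^ k1 * (R ^ k2 * R ^ k3)" "A ^ k = A ^ k1 * (A ^ k2 * A ^ k3)"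
    "A ^ (k - 1) = A ^ (k1 - 1) * (A ^ k2 * A ^ k3)"
    "sqrt t ^ (k - 3) = sqrt t ^ (k1 - 1) * (sqrt t ^ (k2 - 1) * sqrt t ^ (k3 - 1))"
    by (simp_all only: power_add)
  then show "inv_2pi\<^sup>2 * (sup_bound R A (fst q) t * (L1_bound R A (fst (snd q)) t * L1_bound R A (snd (snd q)) t))
      = composition_weight q * (R ^ k * A ^ (k - 1) * sqrt t ^ (k - 3))"
    and "inv_2pi\<^sup>2 * (L1_bound R A (fst q) t * (L1_bound R A (fst (snd q)) t * L1_bound R A (snd (snd q)) t))
      = composition_weight q * (R ^ k * A ^ k * sqrt t ^ (k - 3))"
    unfolding sup_bound_def L1_bound_def composition_weight_def q by (simp_all add: mult_ac)
qed

lemma ft_ift_cubic_iterates_bounds: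
  assumes R: "0 < R" and A: "0 < A" and \<tau>: "0 \<le> \<tau>" and q: "q \<in> compositions3 k"
    and bounds: "iterate_bounds \<mu> R N A (fst q) \<tau>" "iterate_bounds \<mu> R N A (fst (snd q)) \<tau>"
      "iterate_bounds \<mu> R N A (snd (snd q)) \<tau>"
  defines "f \<equiv> ft (ift_cubic (Uhat \<mu> (phi_hat R N A) (fst q) \<tau>) (Uhat \<mu> (phi_hat R N A) (fst (snd q)) \<tau>)
      (Uhat \<mu> (phi_hat R N A) (snd (snd q)) \<tau>))"
  shows "norm (f \<xi>) \<le> composition_weight q * (R ^ k * A ^ (k - 1) * sqrt \<tau> ^ (k - 3))"
    and "(\<integral>\<^sup>+\<xi>. ennreal (norm (f \<xi>)) \<partial>lborel) \<le> ennreal (composition_weight q * (R ^ k * A ^ k * sqrt \<tau> ^ (k - 3)))"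
    and "\<xi> \<notin> freq_support N A k \<Longrightarrow> f \<xi> = 0"
proof -
  let ?F = "Uhat \<mu> (phi_hat R N A) (fst q) \<tau>" and ?G = "Uhat \<mu> (phi_hat R N A) (fst (snd q)) \<tau>"
    and ?H = "Uhat \<mu> (phi_hat R N A) (snd (snd q)) \<tau>"
  have F: "integrable lborel ?F" "\<And>a. norm (?F a) \<le> sup_bound R A (fst q) \<tau>"
    "(\<integral>a. norm (?F a) \<partial>lborel) \<le> L1_bound R A (fst q) \<tau>" "\<And>a. a \<notin> freq_support N A (fst q) \<Longrightarrow> ?F a = 0"
    and G: "integrable lborel ?G" "(\<integral>b. norm (?G b) \<partial>lborel) \<le> L1_bound R A (fst (snd q)) \<tau>"
    "\<And>b. b \<notin> freq_support N A (fst (snd q)) \<Longrightarrow> ?G b = 0"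
    and H: "integrable lborel ?H" "(\<integral>c. norm (?H c) \<partial>lborel) \<le> L1_bound R A (snd (snd q)) \<tau>"
    "\<And>c. c \<notin> freq_support N A (snd (snd q)) \<Longrightarrow> ?H c = 0"
    using bounds unfolding iterate_bounds_def by auto
  have nonneg: "0 \<le> sup_bound R A (fst q) \<tau>" "0 \<le> L1_bound R A (fst q) \<tau>"
    "0 \<le> L1_bound R A (fst (snd q)) \<tau>" "0 \<le> L1_bound R A (snd (snd q)) \<tau>"
    using R A \<tau> by (auto intro: sup_bound_nonneg L1_bound_nonneg)
  have "norm (f \<xi>) \<le> inv_2pi\<^sup>2 * (sup_bound R A (fst q) \<tau> * ((\<integral>b. norm (?G b) \<partial>lborel) * (\<integral>c. norm (?H c) \<partial>lborel)))"
    unfolding f_def by (rule norm_ft_ift_cubic_le[OF F(1) G(1) H(1) F(2)])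
  also have "\<dots> \<le> inv_2pi\<^sup>2 * (sup_bound R A (fst q) \<tau> * (L1_bound R A (fst (snd q)) \<tau> * L1_bound R A (snd (snd q)) \<tau>))"
    using nonneg G(2) H(2) by (intro mult_left_mono mult_mono) auto
  finally show "norm (f \<xi>) \<le> composition_weight q * (R ^ k * A ^ (k - 1) * sqrt \<tau> ^ (k - 3))"
    unfolding bound_products(1)[OF q] .
  have "(\<integral>\<^sup>+\<xi>. ennreal (norm (f \<xi>)) \<partial>lborel)
      \<le> ennreal (inv_2pi\<^sup>2 * ((\<integral>a. norm (?F a) \<partial>lborel) * ((\<integral>b. norm (?G b) \<partial>lborel) * (\<integral>c. norm (?H c) \<partial>lborel))))"
    unfolding f_def by (rule nn_integral_norm_ft_ift_cubic_le[OF F(1) G(1) H(1)])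
  also have "\<dots> \<le> ennreal (inv_2pi\<^sup>2 * (L1_bound R A (fst q) \<tau> * (L1_bound R A (fst (snd q)) \<tau> * L1_bound R A (snd (snd q)) \<tau>)))"
    using nonneg F(3) G(2) H(2) by (intro ennreal_leI mult_left_mono mult_mono) auto
  finally show "(\<integral>\<^sup>+\<xi>. ennreal (norm (f \<xi>)) \<partial>lborel) \<le> ennreal (composition_weight q * (R ^ k * A ^ k * sqrt \<tau> ^ (k - 3)))"
    unfolding bound_products(2)[OF q] .
  assume "\<xi> \<notin> freq_support N A k"
  then show "f \<xi> = 0"
    unfolding f_def using A freq_support_separated[of "fst q" "fst (snd q)" "snd (snd q)" k] q
    by (intro ft_ift_cubic_eq_0_if_separated[OF F(1) G(1) H(1) A F(4) G(3) H(3)]) auto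
qed

lemma sqrt_power_mult_self:
  assumes "0 \<le> t" and "3 \<le> k"
  shows "sqrt t ^ (k - 3) * t = sqrt t ^ (k - 1)"
proof -
  have "k - 1 = (k - 3) + 2"
    using assms(2) by simp
  then show ?thesis
    using assms(1) by (simp add: power_add)
qed

lemma sqrt_power_mono: "0 \<le> \<tau> \<Longrightarrow> \<tau> \<le> t \<Longrightarrow> sqrt \<tau> ^ n \<le> sqrt t ^ n"
  by (intro power_mono) auto

context
  fixes \<mu> R N A t :: real and k :: nat and q :: "nat \<times> nat \<times> nat"
  assumes R: "0 < R" and A: "0 < A" and t: "0 \<le> t" and q: "q \<in> compositions3 k"
    and bounds: "\<And>\<tau>. 0 \<le> \<tau> \<Longrightarrow> \<tau> \<le> t \<Longrightarrow> iterate_bounds \<mu> R N A (fst q) \<tau> \<and>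
      iterate_bounds \<mu> R N A (fst (snd q)) \<tau> \<and> iterate_bounds \<mu> R N A (snd (snd q)) \<tau>"
begin

lemma norm_duhamel_term_le:
  "norm (duhamel_term \<mu> (phi_hat R N A) q t \<xi>) \<le> composition_weight q * (R ^ k * A ^ (k - 1) * sqrt t ^ (k - 1))"
proof -
  have "norm (duhamel_term \<mu> (phi_hat R N A) q t \<xi>) \<le> composition_weight q * (R ^ k * A ^ (k - 1) * sqrt t ^ (k - 3)) * t"
    unfolding duhamel_term_def
  proof (rule norm_set_integral_Icc_le[OF t])
    fix \<tau> assume \<tau>: "0 \<le> \<tau>" "\<tau> \<le> t"
    have "norm (ft (ift_cubic (Uhat \<mu> (phi_hat R N A) (fst q) \<tau>) (Uhat \<mu> (phi_hat R N A) (fst (snd q)) \<tau>)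
        (Uhat \<mu> (phi_hat R N A) (snd (snd q)) \<tau>)) \<xi>) \<le> composition_weight q * (R ^ k * A ^ (k - 1) * sqrt \<tau> ^ (k - 3))"
      using bounds[OF \<tau>] by (intro ft_ift_cubic_iterates_bounds(1)[OF R A \<tau>(1) q]) auto
    also have "\<dots> \<le> composition_weight q * (R ^ k * A ^ (k - 1) * sqrt t ^ (k - 3))"
      using R A sqrt_power_mono[OF \<tau>] composition_weight_nonneg[of q] by (intro mult_left_mono) auto
    finally show "norm (cis (- ((t - \<tau>) * \<bar>\<xi>\<bar>)) * ft (ift_cubic (Uhat \<mu> (phi_hat R N A) (fst q) \<tau>)
        (Uhat \<mu> (phi_hat R N A) (fst (snd q)) \<tau>) (Uhat \<mu> (phi_hat R N A) (snd (snd q)) \<tau>)) \<xi>)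
      \<le> composition_weight q * (R ^ k * A ^ (k - 1) * sqrt t ^ (k - 3))"
      by (simp add: norm_mult)
  qed
  also have "\<dots> = composition_weight q * (R ^ k * A ^ (k - 1) * sqrt t ^ (k - 1))"
    unfolding sqrt_power_mult_self[OF t compositions3_ge_3[OF q], symmetric] by (simp only: mult_ac)
  finally show ?thesis .
qed

lemma nn_integral_norm_duhamel_term_le:
  "(\<integral>\<^sup>+\<xi>. ennreal (norm (duhamel_term \<mu> (phi_hat R N A) q t \<xi>)) \<partial>lborel)
    \<le> ennreal (composition_weight q * (R ^ k * A ^ k * sqrt t ^ (k - 1)))"
proof -
  have [measurable]: "case_prod (Uhat \<mu> (phi_hat R N A) m) \<in> borel_measurable (borel \<Otimes>\<^sub>M borel)" for m
    by (rule Uhat_measurable) simp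
  have "(\<integral>\<^sup>+\<xi>. ennreal (norm (duhamel_term \<mu> (phi_hat R N A) q t \<xi>)) \<partial>lborel)
      \<le> ennreal (composition_weight q * (R ^ k * A ^ k * sqrt t ^ (k - 3)) * t)"
    unfolding duhamel_term_def
  proof (rule nn_integral_norm_set_integral_Icc_le[OF t])
    show "0 \<le> composition_weight q * (R ^ k * A ^ k * sqrt t ^ (k - 3))"
      using composition_weight_nonneg[of q] R A t by simp
    fix \<tau> assume \<tau>: "0 \<le> \<tau>" "\<tau> \<le> t"
    have "(\<integral>\<^sup>+\<xi>. ennreal (norm (ft (ift_cubic (Uhat \<mu> (phi_hat R N A) (fst q) \<tau>)
        (Uhat \<mu> (phi_hat R N A) (fst (snd q)) \<tau>) (Uhat \<mu> (phi_hat R N A) (snd (snd q)) \<tau>)) \<xi>)) \<partial>lborel)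
      \<le> ennreal (composition_weight q * (R ^ k * A ^ k * sqrt \<tau> ^ (k - 3)))"
      using bounds[OF \<tau>] by (intro ft_ift_cubic_iterates_bounds(2)[OF R A \<tau>(1) q]) auto
    also have "\<dots> \<le> ennreal (composition_weight q * (R ^ k * A ^ k * sqrt t ^ (k - 3)))"
      using R A sqrt_power_mono[OF \<tau>] composition_weight_nonneg[of q] by (intro ennreal_leI mult_left_mono) auto
    finally show "(\<integral>\<^sup>+\<xi>. ennreal (norm (cis (- ((t - \<tau>) * \<bar>\<xi>\<bar>)) * ft (ift_cubic (Uhat \<mu> (phi_hat R N A) (fst q) \<tau>)
        (Uhat \<mu> (phi_hat R N A) (fst (snd q)) \<tau>) (Uhat \<mu> (phi_hat R N A) (snd (snd q)) \<tau>)) \<xi>)) \<partial>lborel)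
      \<le> ennreal (composition_weight q * (R ^ k * A ^ k * sqrt t ^ (k - 3)))"
      by (simp add: norm_mult)
  qed measurable
  also have "composition_weight q * (R ^ k * A ^ k * sqrt t ^ (k - 3)) * t
      = composition_weight q * (R ^ k * A ^ k * sqrt t ^ (k - 1))"
    unfolding sqrt_power_mult_self[OF t compositions3_ge_3[OF q], symmetric] by (simp only: mult_ac)
  finally show ?thesis .
qed

lemma duhamel_term_eq_0:
  assumes \<xi>: "\<xi> \<notin> freq_support N A k"
  shows "duhamel_term \<mu> (phi_hat R N A) q t \<xi> = 0"
proof -
  have "ft (ift_cubic (Uhat \<mu> (phi_hat R N A) (fst q) \<tau>) (Uhat \<mu> (phi_hat R N A) (fst (snd q)) \<tau>)
      (Uhat \<mu> (phi_hat R N A) (snd (snd q)) \<tau>)) \<xi> = 0" if "0 \<le> \<tau>" "\<tau> \<le> t" for \<tau>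
    using bounds[OF that] by (intro ft_ift_cubic_iterates_bounds(3)[OF R A that(1) q _ _ _ \<xi>]) auto
  then show ?thesis
    unfolding duhamel_term_def set_integral_Icc_eq by (simp cong: if_cong)
qed

end

lemma nn_integral_norm_sum_le:
  fixes f :: "'i \<Rightarrow> real \<Rightarrow> complex"
  assumes I: "finite I" and [measurable]: "\<And>i. i \<in> I \<Longrightarrow> f i \<in> borel_measurable borel"
    and f: "\<And>i. i \<in> I \<Longrightarrow> (\<integral>\<^sup>+x. ennreal (norm (f i x)) \<partial>lborel) \<le> ennreal (c i)"
    and c: "\<And>i. i \<in> I \<Longrightarrow> 0 \<le> c i"
  shows "(\<integral>\<^sup>+x. ennreal (norm (\<Sum>i\<in>I. f i x)) \<partial>lborel) \<le> ennreal (\<Sum>i\<in>I. c i)"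
proof -
  have "(\<integral>\<^sup>+x. ennreal (norm (\<Sum>i\<in>I. f i x)) \<partial>lborel) \<le> (\<integral>\<^sup>+x. (\<Sum>i\<in>I. ennreal (norm (f i x))) \<partial>lborel)"
    by (intro nn_integral_mono) (simp add: sum_ennreal norm_sum ennreal_leI)
  also have "\<dots> = (\<Sum>i\<in>I. (\<integral>\<^sup>+x. ennreal (norm (f i x)) \<partial>lborel))"
    by (rule nn_integral_sum) auto
  also have "\<dots> \<le> (\<Sum>i\<in>I. ennreal (c i))"
    by (intro sum_mono f)
  also have "\<dots> = ennreal (\<Sum>i\<in>I. c i)"
    using c by (simp add: sum_ennreal)
  finally show ?thesis .
qed

lemma iterate_bounds_step:
  assumes \<mu>: "\<bar>\<mu>\<bar> = 1" and R: "0 < R" and A: "0 < A" and t: "0 \<le> t" and k: "3 \<le> k"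
    and IH: "\<And>m \<tau>. m < k \<Longrightarrow> 1 \<le> m \<Longrightarrow> 0 \<le> \<tau> \<Longrightarrow> iterate_bounds \<mu> R N A m \<tau>"
  shows "iterate_bounds \<mu> R N A k t"
proof -
  let ?U = "Uhat \<mu> (phi_hat R N A) k t" and ?X = "\<lambda>q. duhamel_term \<mu> (phi_hat R N A) q t"
  have bounds: "iterate_bounds \<mu> R N A (fst q) \<tau> \<and> iterate_bounds \<mu> R N A (fst (snd q)) \<tau> \<and>
      iterate_bounds \<mu> R N A (snd (snd q)) \<tau>" if "q \<in> compositions3 k" "0 \<le> \<tau>" for q \<tau>
    using that by (auto simp: compositions3_def intro!: IH)
  have U_eq: "?U \<xi> = - \<i> * complex_of_real \<mu> * (\<Sum>q\<in>compositions3 k. ?X q \<xi>)" for \<xi>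
    using k by (simp add: Uhat_rec)
  have norm_U: "norm (?U \<xi>) = norm (\<Sum>q\<in>compositions3 k. ?X q \<xi>)" for \<xi>
    unfolding U_eq using \<mu> by (simp add: norm_mult)
  have sup: "norm (?U \<xi>) \<le> sup_bound R A k t" for \<xi>
  proof -
    have "norm (?U \<xi>) \<le> (\<Sum>q\<in>compositions3 k. composition_weight q * (R ^ k * A ^ (k - 1) * sqrt t ^ (k - 1)))"
      unfolding norm_U using bounds
      by (intro order.trans[OF norm_sum] sum_mono norm_duhamel_term_le[OF R A t]) auto
    also have "\<dots> \<le> iterate_weight k * (R ^ k * A ^ (k - 1) * sqrt t ^ (k - 1))"
      using sum_composition_weight_le[OF k] R A t by (simp add: sum_distrib_right[symmetric] mult_right_mono)
    finally show ?thesis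
      unfolding sup_bound_def by (simp only: mult.assoc)
  qed
  have [measurable]: "case_prod (Uhat \<mu> (phi_hat R N A) m) \<in> borel_measurable (borel \<Otimes>\<^sub>M borel)" for m
    by (rule Uhat_measurable) simp
  have "(\<integral>\<^sup>+\<xi>. ennreal (norm (?U \<xi>)) \<partial>lborel)
      \<le> ennreal (\<Sum>q\<in>compositions3 k. composition_weight q * (R ^ k * A ^ k * sqrt t ^ (k - 1)))"
    unfolding norm_U using bounds R A t composition_weight_nonneg
    by (intro nn_integral_norm_sum_le nn_integral_norm_duhamel_term_le[OF R A t]) auto
  also have "\<dots> \<le> ennreal (L1_bound R A k t)"
    using sum_composition_weight_le[OF k] R A t unfolding L1_bound_def
    by (intro ennreal_leI) (simp add: sum_distrib_right[symmetric] mult_right_mono mult.assoc)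
  finally have nn_integral_U: "(\<integral>\<^sup>+\<xi>. ennreal (norm (?U \<xi>)) \<partial>lborel) \<le> ennreal (L1_bound R A k t)" .
  then have integrable: "integrable lborel ?U"
    by (intro integrableI_bounded) (auto simp: le_less_trans)
  have "(\<integral>\<xi>. norm (?U \<xi>) \<partial>lborel) \<le> L1_bound R A k t"
    using nn_integral_U L1_bound_nonneg[of R A t k] R A t
    by (simp add: nn_integral_norm_eq_integral[OF integrable] ennreal_le_iff)
  moreover have "?U \<xi> = 0" if "\<xi> \<notin> freq_support N A k" for \<xi>
    unfolding U_eq using bounds that by (simp add: duhamel_term_eq_0[OF R A t])
  ultimately show ?thesis
    unfolding iterate_bounds_def using integrable sup by blast
qed

lemma iterate_bounds_1:
  assumes R: "0 < R" and A: "0 < A"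
  shows "iterate_bounds \<mu> R N A 1 t"
proof -
  have U1: "Uhat \<mu> (phi_hat R N A) 1 t = (\<lambda>\<xi>. cis (- (t * \<bar>\<xi>\<bar>)) * phi_hat R N A \<xi>)"
    by (rule ext) (rule Uhat_1)
  have norm_U1: "norm (Uhat \<mu> (phi_hat R N A) 1 t \<xi>) = norm (phi_hat R N A \<xi>)" for \<xi>
    unfolding U1 by (simp add: norm_mult)
  have "integrable lborel (Uhat \<mu> (phi_hat R N A) 1 t)"
    unfolding U1 by (rule integrable_mult_bounded[OF integrable_phi_hat(1)[OF R A]]) auto
  moreover have "sup_bound R A 1 t = 2 * R" "L1_bound R A 1 t = 2 * R * A"
    unfolding sup_bound_def L1_bound_def iterate_weight_def by simp_all
  moreover have "Uhat \<mu> (phi_hat R N A) 1 t \<xi> = 0" if "\<xi> \<notin> freq_support N A 1" for \<xi>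
    unfolding U1 using phi_hat_eq_0[OF that] by simp
  ultimately show ?thesis
    unfolding iterate_bounds_def norm_U1
    using norm_phi_hat_le[OF R] integrable_phi_hat(2)[OF R A] by auto
qed

lemma iterate_bounds_2:
  assumes "0 < R" "0 < A" "0 \<le> t"
  shows "iterate_bounds \<mu> R N A 2 t"
proof -
  have "Uhat \<mu> (phi_hat R N A) 2 t = (\<lambda>_. 0)"
    by (rule ext) (rule Uhat_2)
  then show ?thesis
    unfolding iterate_bounds_def using assms sup_bound_nonneg L1_bound_nonneg by simp
qed

lemma iterate_bounds:
  assumes \<mu>: "\<bar>\<mu>\<bar> = 1" and R: "0 < R" and A: "0 < A" and k: "1 \<le> k" and t: "0 \<le> t"
  shows "iterate_bounds \<mu> R N A k t"
  using k t
proof (induction k arbitrary: t rule: less_induct)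
  case (less k)
  consider "k = 1" | "k = 2" | "3 \<le> k"
    using less.prems by linarith
  then show ?case
  proof cases
    case 1
    then show ?thesis
      using iterate_bounds_1[OF R A] by simp
  next
    case 2
    then show ?thesis
      using iterate_bounds_2[OF R A less.prems(2)] by simp
  next
    case 3
    then show ?thesis
      by (rule iterate_bounds_step[OF \<mu> R A less.prems(2) _ less.IH])
  qed
qed


section \<open>Sobolev weights\<close>

definition sobolev_weight :: "real \<Rightarrow> real \<Rightarrow> real" where
  "sobolev_weight s \<xi> = sqrt (1 + \<xi>\<^sup>2) powr (2 * s)"

lemma sobolev_weight_measurable [measurable]: "sobolev_weight s \<in> borel_measurable borel"
  unfolding sobolev_weight_def by measurable

lemma sobolev_weight_pos: "0 < sobolev_weight s \<xi>"
proof -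
  have "0 < 1 + \<xi>\<^sup>2"
    by (simp add: add_pos_nonneg)
  then show ?thesis
    unfolding sobolev_weight_def by simp
qed

lemma sobolev_weight_antimono:
  assumes "s \<le> 0" and "\<bar>\<eta>\<bar> \<le> \<bar>\<xi>\<bar>"
  shows "sobolev_weight s \<xi> \<le> sobolev_weight s \<eta>"
proof -
  have "\<eta>\<^sup>2 \<le> \<xi>\<^sup>2"
    using assms(2) by (metis abs_le_square_iff)
  then show ?thesis
    unfolding sobolev_weight_def using assms(1) by (intro powr_mono2') (auto simp: add_pos_nonneg)
qed

lemma sobolev_weight_le_1: "s \<le> 0 \<Longrightarrow> sobolev_weight s \<xi> \<le> 1"
  using sobolev_weight_antimono[of s 0 \<xi>] by (simp add: sobolev_weight_def)

lemma sobolev_weight_le_abs_powr: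
  assumes "s \<le> 0" and "\<xi> \<noteq> 0"
  shows "sobolev_weight s \<xi> \<le> \<bar>\<xi>\<bar> powr (2 * s)"
proof -
  have "\<bar>\<xi>\<bar> \<le> sqrt (1 + \<xi>\<^sup>2)"
    by (metis real_sqrt_abs real_sqrt_le_mono le_add_same_cancel2 zero_le_one)
  then show ?thesis
    unfolding sobolev_weight_def using assms by (intro powr_mono2') auto
qed

lemma in_Hs_hat_and_Hs_norm_hat_le:
  fixes F :: "real \<Rightarrow> complex"
  assumes [measurable]: "F \<in> borel_measurable borel" and Q: "0 \<le> Q"
    and bound: "(\<integral>\<^sup>+\<xi>. ennreal (sobolev_weight s \<xi> * (norm (F \<xi>))\<^sup>2) \<partial>lborel) \<le> ennreal Q"
  shows "in_Hs_hat s F \<and> Hs_norm_hat s F \<le> sqrt Q"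
proof -
  have nonneg: "0 \<le> sobolev_weight s \<xi> * (norm (F \<xi>))\<^sup>2" for \<xi>
    using sobolev_weight_pos[of s \<xi>] by simp
  have integrable: "integrable lborel (\<lambda>\<xi>. sobolev_weight s \<xi> * (norm (F \<xi>))\<^sup>2)"
    using bound nonneg by (intro integrableI_bounded) (auto simp: le_less_trans)
  have "ennreal (\<integral>\<xi>. sobolev_weight s \<xi> * (norm (F \<xi>))\<^sup>2 \<partial>lborel) \<le> ennreal Q"
    using bound nonneg by (subst nn_integral_eq_integral[symmetric]) (auto intro: integrable)
  then have integral: "(\<integral>\<xi>. sobolev_weight s \<xi> * (norm (F \<xi>))\<^sup>2 \<partial>lborel) \<le> Q"
    using Q by (simp add: ennreal_le_iff)
  have "Hs_norm_hat s F = (1 / sqrt (2 * pi)) * sqrt (\<integral>\<xi>. sobolev_weight s \<xi> * (norm (F \<xi>))\<^sup>2 \<partial>lborel)"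
    unfolding Hs_norm_hat_def sobolev_weight_def by simp
  also have "\<dots> \<le> 1 * sqrt Q"
    using integral integral_nonneg_AE[of "\<lambda>\<xi>. sobolev_weight s \<xi> * (norm (F \<xi>))\<^sup>2" lborel] nonneg pi_gt3
    by (intro mult_mono) auto
  finally show ?thesis
    using integrable unfolding in_Hs_hat_def sobolev_weight_def by simp
qed

text \<open>Among intervals of a given length, a weight decreasing in \<open>\<bar>\<xi>\<bar>\<close> has the largest integral
  over the centred one: the two set differences have equal measure and the weight is larger on the
  one inside.\<close>

lemma nn_integral_radial_weight_interval_le:
  fixes w :: "real \<Rightarrow> real"
  assumes [measurable]: "w \<in> borel_measurable borel"
    and antimono: "\<And>\<xi> \<eta>. \<bar>\<eta>\<bar> \<le> \<bar>\<xi>\<bar> \<Longrightarrow> w \<xi> \<le> w \<eta>" and \<rho>: "0 \<le> \<rho>"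
  shows "(\<integral>\<^sup>+\<xi>. ennreal (w \<xi>) * indicator {c - \<rho> .. c + \<rho>} \<xi> \<partial>lborel)
    \<le> (\<integral>\<^sup>+\<xi>. ennreal (w \<xi>) * indicator {- \<rho> .. \<rho>} \<xi> \<partial>lborel)"
proof -
  define I where "I = {c - \<rho> .. c + \<rho>}"
  define J where "J = {- \<rho> .. \<rho>}"
  have sets [measurable]: "I \<in> sets borel" "J \<in> sets borel"
    unfolding I_def J_def by auto
  have split: "(\<integral>\<^sup>+\<xi>. ennreal (w \<xi>) * indicator X \<xi> \<partial>lborel)
     = (\<integral>\<^sup>+\<xi>. ennreal (w \<xi>) * indicator (X \<inter> Y) \<xi> \<partial>lborel) + (\<integral>\<^sup>+\<xi>. ennreal (w \<xi>) * indicator (X - Y) \<xi> \<partial>lborel)"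
    if [measurable]: "X \<in> sets borel" "Y \<in> sets borel" for X Y
  proof -
    have "(\<lambda>\<xi>. ennreal (w \<xi>) * indicator X \<xi>)
        = (\<lambda>\<xi>. ennreal (w \<xi>) * indicator (X \<inter> Y) \<xi> + ennreal (w \<xi>) * indicator (X - Y) \<xi>)"
      by (auto simp: indicator_def fun_eq_iff)
    then show ?thesis
      by (simp add: nn_integral_add)
  qed
  have "emeasure lborel (I \<inter> J) + emeasure lborel (I - J) = emeasure lborel I"
    by (subst plus_emeasure) (auto intro: arg_cong[where f="emeasure lborel"])
  moreover have "emeasure lborel (I \<inter> J) + emeasure lborel (J - I) = emeasure lborel J"
    by (subst plus_emeasure) (auto intro: arg_cong[where f="emeasure lborel"])
  moreover have "emeasure lborel I = emeasure lborel J"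
    using \<rho> by (simp add: I_def J_def)
  moreover have "emeasure lborel (I \<inter> J) \<noteq> \<infinity>"
  proof -
    have "emeasure lborel (I \<inter> J) \<le> emeasure lborel J"
      by (intro emeasure_mono) auto
    then show ?thesis
      using \<rho> by (auto simp: J_def top_unique)
  qed
  ultimately have same_measure: "emeasure lborel (I - J) = emeasure lborel (J - I)"
    by (metis ennreal_add_left_cancel)
  have "(\<integral>\<^sup>+\<xi>. ennreal (w \<xi>) * indicator (I - J) \<xi> \<partial>lborel) \<le> (\<integral>\<^sup>+\<xi>. ennreal (w \<rho>) * indicator (I - J) \<xi> \<partial>lborel)"
    using \<rho> by (intro nn_integral_mono) (auto simp: J_def indicator_def intro!: ennreal_leI antimono)
  also have "\<dots> = (\<integral>\<^sup>+\<xi>. ennreal (w \<rho>) * indicator (J - I) \<xi> \<partial>lborel)"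
    by (simp add: nn_integral_cmult_indicator same_measure)
  also have "\<dots> \<le> (\<integral>\<^sup>+\<xi>. ennreal (w \<xi>) * indicator (J - I) \<xi> \<partial>lborel)"
    using \<rho> by (intro nn_integral_mono) (auto simp: J_def indicator_def intro!: ennreal_leI antimono)
  finally have "(\<integral>\<^sup>+\<xi>. ennreal (w \<xi>) * indicator (I \<inter> J) \<xi> \<partial>lborel) + (\<integral>\<^sup>+\<xi>. ennreal (w \<xi>) * indicator (I - J) \<xi> \<partial>lborel)
      \<le> (\<integral>\<^sup>+\<xi>. ennreal (w \<xi>) * indicator (J \<inter> I) \<xi> \<partial>lborel) + (\<integral>\<^sup>+\<xi>. ennreal (w \<xi>) * indicator (J - I) \<xi> \<partial>lborel)"
    by (simp add: Int_commute add_left_mono)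
  then show ?thesis
    by (simp only: I_def[symmetric] J_def[symmetric] split[OF sets] split[OF sets(2,1)])
qed

lemma nn_integral_sobolev_weight_freq_support_le:
  assumes s: "s \<le> 0" and A: "0 < A" and k: "1 \<le> k"
  defines "\<rho> \<equiv> (real k - 1/2) * A"
  shows "(\<integral>\<^sup>+\<xi>. ennreal (sobolev_weight s \<xi>) * indicator (freq_support N A k) \<xi> \<partial>lborel)
    \<le> of_nat (4 * k + 1) * (\<integral>\<^sup>+\<xi>. ennreal (sobolev_weight s \<xi>) * indicator {- \<rho> .. \<rho>} \<xi> \<partial>lborel)"
proof -
  have \<rho>: "0 \<le> \<rho>"
    unfolding \<rho>_def using A k by simp
  define J where "J = {- 2 * int k .. 2 * int k}"
  have "indicator (freq_support N A k) \<xi> \<le> (\<Sum>j\<in>J. indicator {of_int j * N - \<rho> .. of_int j * N + \<rho>} \<xi> :: ennreal)" for \<xi>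
  proof (cases "\<xi> \<in> freq_support N A k")
    case True
    then obtain j where "j \<in> J" "\<xi> \<in> {of_int j * N - \<rho> .. of_int j * N + \<rho>}"
      unfolding freq_support_eq_Union J_def \<rho>_def by blast
    then show ?thesis
      using True by (intro order.trans[OF _ member_le_sum[of j]]) (auto simp: J_def)
  qed simp
  then have "(\<integral>\<^sup>+\<xi>. ennreal (sobolev_weight s \<xi>) * indicator (freq_support N A k) \<xi> \<partial>lborel)
      \<le> (\<integral>\<^sup>+\<xi>. (\<Sum>j\<in>J. ennreal (sobolev_weight s \<xi>) * indicator {of_int j * N - \<rho> .. of_int j * N + \<rho>} \<xi>) \<partial>lborel)"
    by (intro nn_integral_mono) (auto simp: sum_distrib_left[symmetric] intro: mult_left_mono)
  also have "\<dots> = (\<Sum>j\<in>J. (\<integral>\<^sup>+\<xi>. ennreal (sobolev_weight s \<xi>) * indicator {of_int j * N - \<rho> .. of_int j * N + \<rho>} \<xi> \<partial>lborel))"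
    by (rule nn_integral_sum) auto
  also have "\<dots> \<le> (\<Sum>j\<in>J. (\<integral>\<^sup>+\<xi>. ennreal (sobolev_weight s \<xi>) * indicator {- \<rho> .. \<rho>} \<xi> \<partial>lborel))"
    by (intro sum_mono nn_integral_radial_weight_interval_le sobolev_weight_antimono s \<rho>) auto
  also have "\<dots> = of_nat (card J) * (\<integral>\<^sup>+\<xi>. ennreal (sobolev_weight s \<xi>) * indicator {- \<rho> .. \<rho>} \<xi> \<partial>lborel)"
    by simp
  also have "card J = 4 * k + 1"
    unfolding J_def by simp
  finally show ?thesis .
qed

lemma nn_integral_sobolev_weight_centred_le:
  assumes s: "s \<le> 0" and \<rho>: "1 \<le> \<rho>"
  shows "(\<integral>\<^sup>+\<xi>. ennreal (sobolev_weight s \<xi>) * indicator {- \<rho> .. \<rho>} \<xi> \<partial>lborel)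
    \<le> 2 + 2 * (\<integral>\<^sup>+x. ennreal (x powr (2 * s)) * indicator {1 .. \<rho>} x \<partial>lborel)"
proof -
  define g where "g x = ennreal (x powr (2 * s)) * indicator {1 .. \<rho>} x" for x
  have [measurable]: "g \<in> borel_measurable borel"
    unfolding g_def by measurable
  have pointwise: "ennreal (sobolev_weight s \<xi>) * indicator {- \<rho> .. \<rho>} \<xi> \<le> indicator {-1 .. 1} \<xi> + (g \<xi> + g (- \<xi>))"
    for \<xi>
  proof -
    consider "\<bar>\<xi>\<bar> \<le> 1" | "1 < \<xi>" | "\<xi> < -1"
      by linarith
    then show ?thesis
    proof cases
      case 1
      then have "ennreal (sobolev_weight s \<xi>) * indicator {- \<rho> .. \<rho>} \<xi> \<le> indicator {-1 .. 1} \<xi>"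
        using sobolev_weight_le_1[OF s, of \<xi>] by (auto simp: indicator_def abs_le_iff intro: ennreal_leI)
      then show ?thesis
        by (rule order.trans) simp
    next
      case 2
      then have "ennreal (sobolev_weight s \<xi>) * indicator {- \<rho> .. \<rho>} \<xi> \<le> g \<xi>"
        unfolding g_def using sobolev_weight_le_abs_powr[OF s, of \<xi>] by (auto simp: indicator_def intro: ennreal_leI)
      then show ?thesis
        by (rule order.trans) (simp add: add_increasing)
    next
      case 3
      then have "ennreal (sobolev_weight s \<xi>) * indicator {- \<rho> .. \<rho>} \<xi> \<le> g (- \<xi>)"
        unfolding g_def using sobolev_weight_le_abs_powr[OF s, of \<xi>] by (auto simp: indicator_def intro: ennreal_leI)
      then show ?thesis
        by (rule order.trans) (simp add: add_increasing2)
    qed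
  qed
  have reflect: "(\<integral>\<^sup>+x. g (- x) \<partial>lborel) = (\<integral>\<^sup>+x. g x \<partial>lborel)"
    using nn_integral_real_affine[of g "-1" 0] by simp
  have "(\<integral>\<^sup>+\<xi>. ennreal (sobolev_weight s \<xi>) * indicator {- \<rho> .. \<rho>} \<xi> \<partial>lborel)
      \<le> (\<integral>\<^sup>+\<xi>. indicator {-1 .. 1} \<xi> + (g \<xi> + g (- \<xi>)) \<partial>lborel)"
    by (intro nn_integral_mono pointwise)
  also have "\<dots> = 2 + 2 * (\<integral>\<^sup>+x. g x \<partial>lborel)"
    by (simp add: nn_integral_add reflect mult_2)
  finally show ?thesis
    unfolding g_def .
qed

lemma nn_integral_powr_Icc:
  assumes \<rho>: "1 \<le> \<rho>" and p: "p \<noteq> -1"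
  shows "(\<integral>\<^sup>+x. ennreal (x powr p) * indicator {1 .. \<rho>} x \<partial>lborel) = ennreal ((\<rho> powr (p + 1) - 1) / (p + 1))"
proof -
  have "(\<integral>\<^sup>+x. ennreal (x powr p) * indicator {1 .. \<rho>} x \<partial>lborel)
      = ennreal (\<rho> powr (p + 1) / (p + 1) - 1 powr (p + 1) / (p + 1))"
  proof (rule nn_integral_FTC_Icc)
    fix x :: real assume "x \<in> {1..\<rho>}"
    then have "((\<lambda>x. x powr (p + 1)) has_real_derivative (p + 1) * x powr (p + 1 - 1)) (at x)"
      by (intro has_real_derivative_powr) auto
    then show "((\<lambda>x. x powr (p + 1) / (p + 1)) has_real_derivative x powr p) (at x)"
      using p by (auto dest: DERIV_cdivide[where c="p + 1"])
  qed (use \<rho> in auto)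
  then show ?thesis
    by (simp add: diff_divide_distrib)
qed

lemma nn_integral_inverse_Icc:
  assumes \<rho>: "1 \<le> \<rho>"
  shows "(\<integral>\<^sup>+x. ennreal (x powr -1) * indicator {1 .. \<rho>} x \<partial>lborel) = ennreal (ln \<rho>)"
proof -
  have "(\<integral>\<^sup>+x. ennreal (x powr -1) * indicator {1 .. \<rho>} x \<partial>lborel) = ennreal (ln \<rho> - ln 1)"
  proof (rule nn_integral_FTC_Icc)
    fix x :: real assume "x \<in> {1..\<rho>}"
    then show "(ln has_real_derivative x powr -1) (at x)"
      by (auto intro!: derivative_eq_intros simp: powr_minus inverse_eq_divide)
  qed (use \<rho> in auto)
  then show ?thesis
    by simp
qed


definition sobolev_const :: "real \<Rightarrow> real" where
  "sobolev_const s = (if s > -1/2 then 2 + 2 / (2 * s + 1) else if s = -1/2 then 10 else 2 + 2 / (- (2 * s + 1)))"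

lemma sobolev_const_nonneg: "s \<le> 0 \<Longrightarrow> 0 \<le> sobolev_const s"
  unfolding sobolev_const_def by (auto intro!: add_nonneg_nonneg divide_nonneg_pos)

lemma gA_nonneg: "0 \<le> gA s A"
  unfolding gA_def by auto

lemma powr_antiderivative_bound_pos:
  fixes p \<rho> k A :: real
  assumes p: "0 < p" "p \<le> 1" and \<rho>: "1 \<le> \<rho>" "\<rho> \<le> k * A" and k: "1 \<le> k" and A: "1 \<le> A"
  shows "2 + 2 * ((\<rho> powr p - 1) / p) \<le> (2 + 2 / p) * k * A powr p"
proof -
  have "(\<rho> powr p - 1) / p \<le> \<rho> powr p / p"
    using p by (simp add: divide_right_mono)
  also have "\<rho> powr p \<le> (k * A) powr p"
    using p \<rho> by (intro powr_mono2) auto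
  also have "(k * A) powr p = k powr p * A powr p"
    using k A by (simp add: powr_mult)
  also have "k powr p \<le> k"
    using powr_mono[of p 1 k] k p by simp
  finally have "(\<rho> powr p - 1) / p \<le> k * A powr p / p"
    using p by (simp add: divide_right_mono mult_right_mono)
  moreover have "1 \<le> k * A powr p"
    using k A p by (metis ge_one_powr_ge_zero less_imp_le mult_mono' mult_1 zero_le_one)
  moreover have "(2 + 2 / p) * k * A powr p = 2 * (k * A powr p) + 2 * (k * A powr p / p)"
    using p by (simp add: field_simps)
  ultimately show ?thesis
    by linarith
qed

lemma ln_bound:
  fixes \<rho> k A :: real
  assumes \<rho>: "1 \<le> \<rho>" "\<rho> \<le> k * A" and k: "1 \<le> k" and A: "2 \<le> A"
  shows "2 + 2 * ln \<rho> \<le> 10 * k * ln A"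
proof -
  have "1 / 2 < ln (2::real)"
    using ln_2_less_1 ln2_ge_two_thirds by simp
  then have ln_A: "1 / 2 \<le> ln A"
    using A by (smt (verit) ln_le_cancel_iff)
  have "ln \<rho> \<le> ln (k * A)"
    using \<rho> by simp
  also have "\<dots> = ln k + ln A"
    using k A by (simp add: ln_mult)
  also have "ln k \<le> k"
    using k by (smt (verit) ln_le_minus_one)
  finally have "ln \<rho> \<le> k + ln A"
    by simp
  moreover have "k * 1 \<le> k * (2 * ln A)"
    using ln_A k by (intro mult_left_mono) auto
  moreover have "1 * ln A \<le> k * ln A"
    using ln_A k by (intro mult_right_mono) auto
  moreover have "1 \<le> 2 * ln A"
    using ln_A by simp
  ultimately show ?thesis
    by linarith
qed

lemma powr_antiderivative_bound_neg:
  fixes p \<rho> k :: real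
  assumes p: "p < 0" and \<rho>: "1 \<le> \<rho>" and k: "1 \<le> k"
  shows "2 + 2 * ((\<rho> powr p - 1) / p) \<le> (2 + 2 / (- p)) * k"
proof -
  have "(\<rho> powr p - 1) / p = (1 - \<rho> powr p) / (- p)"
    using p by (simp add: field_simps)
  also have "\<dots> \<le> 1 / (- p)"
    using p by (intro divide_right_mono) auto
  finally have "(\<rho> powr p - 1) / p \<le> 1 / (- p)" .
  moreover have "2 * (1 / (- p)) = 2 / (- p)"
    by simp
  ultimately have "2 + 2 * ((\<rho> powr p - 1) / p) \<le> 2 + 2 / (- p)"
    by linarith
  also have "\<dots> \<le> (2 + 2 / (- p)) * k"
  proof -
    have "0 < 2 / (- p)"
      using p by simp
    then have "0 \<le> 2 + 2 / (- p)"
      by linarith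
    from mult_left_mono[OF k this] show ?thesis
      by simp
  qed
  finally show ?thesis .
qed

definition powr_integral :: "real \<Rightarrow> real \<Rightarrow> real" where
  "powr_integral s \<rho> = (if s = -1/2 then ln \<rho> else (\<rho> powr (2 * s + 1) - 1) / (2 * s + 1))"

lemma nn_integral_powr_Icc_eq:
  "1 \<le> \<rho> \<Longrightarrow> (\<integral>\<^sup>+x. ennreal (x powr (2 * s)) * indicator {1 .. \<rho>} x \<partial>lborel) = ennreal (powr_integral s \<rho>)"
  using nn_integral_powr_Icc[of \<rho> "2 * s"] nn_integral_inverse_Icc[of \<rho>]
  by (cases "s = -1/2") (simp_all add: powr_integral_def)

lemma powr_integral_nonneg:
  assumes "1 \<le> \<rho>"
  shows "0 \<le> powr_integral s \<rho>"
proof -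
  consider "s = -1/2" | "0 < 2 * s + 1" | "2 * s + 1 < 0"
    by linarith
  then show ?thesis
  proof cases
    case 2
    then show ?thesis
      using assms by (simp add: powr_integral_def ge_one_powr_ge_zero)
  next
    case 3
    then show ?thesis
      using assms by (auto simp: powr_integral_def intro!: divide_nonpos_neg powr_le_one_le
          simp: powr_mono2'[of "2 * s + 1" 1 \<rho>, simplified])
  qed (use assms in \<open>simp add: powr_integral_def\<close>)
qed

lemma powr_integral_le:
  fixes k A \<rho> :: real
  assumes s: "s \<le> 0" and A: "2 \<le> A" and k: "1 \<le> k" and \<rho>: "1 \<le> \<rho>" "\<rho> \<le> k * A"
  shows "2 + 2 * powr_integral s \<rho> \<le> sobolev_const s * k * (gA s A)\<^sup>2"
proof -
  consider "s > -1/2" | "s = -1/2" | "s < -1/2"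
    by linarith
  then show ?thesis
  proof cases
    case 1
    have "(gA s A)\<^sup>2 = A powr (2 * s + 1)"
      using 1 by (simp add: gA_def power2_eq_square flip: powr_add)
    then show ?thesis
      using powr_antiderivative_bound_pos[of "2 * s + 1" \<rho> k A] 1 s \<rho> k A
      by (simp add: sobolev_const_def powr_integral_def)
  next
    case 2
    have "(gA s A)\<^sup>2 = ln A"
      using 2 A by (simp add: gA_def powr_half_sqrt)
    then show ?thesis
      using ln_bound[OF \<rho> k A] 2 by (simp add: sobolev_const_def powr_integral_def)
  next
    case 3
    then show ?thesis
      using powr_antiderivative_bound_neg[of "2 * s + 1" \<rho> k] \<rho> k
      by (simp add: sobolev_const_def gA_def powr_integral_def)
  qed
qed

lemma nn_integral_sobolev_weight_centred_le_const:
  assumes s: "s \<le> 0" and A: "2 \<le> A" and k: "1 \<le> k"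
  defines "\<rho> \<equiv> (real k - 1/2) * A"
  shows "(\<integral>\<^sup>+\<xi>. ennreal (sobolev_weight s \<xi>) * indicator {- \<rho> .. \<rho>} \<xi> \<partial>lborel)
    \<le> ennreal (sobolev_const s * k * (gA s A)\<^sup>2)"
proof -
  have "(1/2) * 2 \<le> (real k - 1/2) * A"
    using A k by (intro mult_mono) auto
  then have \<rho>: "1 \<le> \<rho>" "\<rho> \<le> k * A"
    unfolding \<rho>_def using A by (simp_all add: algebra_simps)
  have "(\<integral>\<^sup>+\<xi>. ennreal (sobolev_weight s \<xi>) * indicator {- \<rho> .. \<rho>} \<xi> \<partial>lborel)
      \<le> 2 + 2 * ennreal (powr_integral s \<rho>)"
    using nn_integral_sobolev_weight_centred_le[OF s \<rho>(1)] unfolding nn_integral_powr_Icc_eq[OF \<rho>(1)] .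
  also have "\<dots> = ennreal (2 + 2 * powr_integral s \<rho>)"
    using powr_integral_nonneg[OF \<rho>(1)] by (simp add: ennreal_plus ennreal_mult)
  also have "\<dots> \<le> ennreal (sobolev_const s * k * (gA s A)\<^sup>2)"
    using powr_integral_le[OF s A _ \<rho>] k by (intro ennreal_leI) simp
  finally show ?thesis .
qed

section \<open>Sobolev norms of the iterates\<close>

lemma abs_ge_half_if_phi_hat_nonzero:
  assumes "phi_hat R N A \<xi> \<noteq> 0" and "0 \<le> A" "A \<le> N"
  shows "N / 2 \<le> \<bar>\<xi>\<bar>"
proof -
  have "\<xi> \<in> {N - A/2 ..< N + A/2} \<or> \<xi> \<in> {2*N - A/2 ..< 2*N + A/2}"
    using assms(1) by (cases "\<xi> \<in> {N - A/2 ..< N + A/2}"; cases "\<xi> \<in> {2*N - A/2 ..< 2*N + A/2}")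
      (simp_all add: phi_hat_def)
  then show ?thesis
    using assms(2,3) by auto
qed

lemma nn_integral_weighted_Uhat_1_le:
  assumes s: "s \<le> 0" and R: "0 < R" and A: "2 \<le> A" "A \<le> N"
  shows "(\<integral>\<^sup>+\<xi>. ennreal (sobolev_weight s \<xi> * (norm (Uhat \<mu> (phi_hat R N A) 1 t \<xi>))\<^sup>2) \<partial>lborel)
    \<le> ennreal ((N / 2) powr (2 * s) * (2 * R) * (2 * R * A))"
proof -
  define c where "c = (N / 2) powr (2 * s) * (2 * R)"
  have c: "0 \<le> c"
    unfolding c_def using R by simp
  have pointwise: "sobolev_weight s \<xi> * (norm (Uhat \<mu> (phi_hat R N A) 1 t \<xi>))\<^sup>2 \<le> c * norm (phi_hat R N A \<xi>)" for \<xi>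
  proof (cases "phi_hat R N A \<xi> = 0")
    case False
    then have \<xi>: "N / 2 \<le> \<bar>\<xi>\<bar>"
      using A by (intro abs_ge_half_if_phi_hat_nonzero) auto
    have "sobolev_weight s \<xi> \<le> \<bar>\<xi>\<bar> powr (2 * s)"
      using \<xi> A by (intro sobolev_weight_le_abs_powr s) auto
    also have "\<dots> \<le> (N / 2) powr (2 * s)"
      using \<xi> A s by (intro powr_mono2') auto
    finally have "sobolev_weight s \<xi> \<le> (N / 2) powr (2 * s)" .
    moreover have "(norm (phi_hat R N A \<xi>))\<^sup>2 \<le> 2 * R * norm (phi_hat R N A \<xi>)"
      unfolding power2_eq_square using norm_phi_hat_le[OF R] by (intro mult_right_mono) auto
    ultimately show ?thesis
      unfolding c_def Uhat_1 norm_mult using sobolev_weight_pos[of s \<xi>]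
      by (simp add: mult_mono mult.assoc)
  qed (unfold Uhat_1, simp)
  have "ennreal (sobolev_weight s \<xi> * (norm (Uhat \<mu> (phi_hat R N A) 1 t \<xi>))\<^sup>2)
      \<le> ennreal c * ennreal (norm (phi_hat R N A \<xi>))" for \<xi>
  proof -
    have "ennreal c * ennreal (norm (phi_hat R N A \<xi>)) = ennreal (c * norm (phi_hat R N A \<xi>))"
      using c by (simp add: ennreal_mult)
    then show ?thesis
      using pointwise[of \<xi>] by (simp only: ennreal_leI)
  qed
  then have "(\<integral>\<^sup>+\<xi>. ennreal (sobolev_weight s \<xi> * (norm (Uhat \<mu> (phi_hat R N A) 1 t \<xi>))\<^sup>2) \<partial>lborel)
      \<le> (\<integral>\<^sup>+\<xi>. ennreal c * ennreal (norm (phi_hat R N A \<xi>)) \<partial>lborel)"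
    by (rule nn_integral_mono)
  also have "\<dots> = ennreal (c * (2 * R * A))"
    using integrable_phi_hat[OF R] A R c
    by (simp add: nn_integral_cmult nn_integral_norm_eq_integral ennreal_mult)
  finally show ?thesis
    unfolding c_def .
qed

lemma nn_integral_weighted_Uhat_le:
  assumes s: "s \<le> 0" and \<mu>: "\<bar>\<mu>\<bar> = 1" and R: "0 < R" and A: "2 \<le> A" and k: "1 \<le> k" and t: "0 \<le> t"
  shows "(\<integral>\<^sup>+\<xi>. ennreal (sobolev_weight s \<xi> * (norm (Uhat \<mu> (phi_hat R N A) k t \<xi>))\<^sup>2) \<partial>lborel)
    \<le> ennreal ((sup_bound R A k t)\<^sup>2 * (real (4 * k + 1) * (sobolev_const s * k * (gA s A)\<^sup>2)))"
proof -
  let ?U = "Uhat \<mu> (phi_hat R N A) k t"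
  define a where "a = sup_bound R A k t"
  have bounds: "iterate_bounds \<mu> R N A k t"
    using A by (intro iterate_bounds \<mu> R k t) auto
  have pointwise: "ennreal (sobolev_weight s \<xi> * (norm (?U \<xi>))\<^sup>2)
      \<le> ennreal (a\<^sup>2) * (ennreal (sobolev_weight s \<xi>) * indicator (freq_support N A k) \<xi>)" for \<xi>
  proof (cases "\<xi> \<in> freq_support N A k")
    case True
    have "(norm (?U \<xi>))\<^sup>2 \<le> a\<^sup>2"
      using bounds unfolding a_def iterate_bounds_def by (intro power_mono) auto
    then show ?thesis
      using True sobolev_weight_pos[of s \<xi>]
      by (simp add: ennreal_mult[symmetric] mult.commute mult_left_mono ennreal_leI)
  qed (use bounds in \<open>simp add: iterate_bounds_def\<close>)
  have "(\<integral>\<^sup>+\<xi>. ennreal (sobolev_weight s \<xi> * (norm (?U \<xi>))\<^sup>2) \<partial>lborel)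
      \<le> ennreal (a\<^sup>2) * (\<integral>\<^sup>+\<xi>. ennreal (sobolev_weight s \<xi>) * indicator (freq_support N A k) \<xi> \<partial>lborel)"
    by (subst nn_integral_cmult[symmetric]) (auto intro: nn_integral_mono pointwise)
  also have "\<dots> \<le> ennreal (a\<^sup>2) * (of_nat (4 * k + 1) * ennreal (sobolev_const s * k * (gA s A)\<^sup>2))"
    using A by (intro mult_left_mono order.trans[OF nn_integral_sobolev_weight_freq_support_le[OF s _ k]]
        nn_integral_sobolev_weight_centred_le_const[OF s A k]) auto
  also have "\<dots> = ennreal (a\<^sup>2 * (real (4 * k + 1) * (sobolev_const s * k * (gA s A)\<^sup>2)))"
    using sobolev_const_nonneg[OF s] by (simp add: ennreal_mult ennreal_of_nat_eq_real_of_nat)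
  finally show ?thesis
    unfolding a_def .
qed

lemma Hs_norm_Uhat_1_le:
  assumes s: "s \<le> 0" and R: "0 < R" and A: "2 \<le> A" "A \<le> N"
  shows "in_Hs_hat s (Uhat \<mu> (phi_hat R N A) 1 t)
    \<and> Hs_norm_hat s (Uhat \<mu> (phi_hat R N A) 1 t) \<le> 2 * 2 powr (- s) * R * A powr (1/2) * N powr s"
proof -
  define Q where "Q = (N / 2) powr (2 * s) * (2 * R) * (2 * R * A)"
  have "0 \<le> Q"
    unfolding Q_def using R A by simp
  note Hs = in_Hs_hat_and_Hs_norm_hat_le[OF Uhat_measurable_at[OF phi_hat_measurable] this,
      unfolded Q_def, OF nn_integral_weighted_Uhat_1_le[OF s R A]]
  have "sqrt ((N / 2) powr (2 * s) * (2 * R) * (2 * R * A)) = sqrt (((N / 2) powr s)\<^sup>2 * (2 * R)\<^sup>2 * A)"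
    by (simp add: power2_eq_square mult_ac flip: powr_add)
  also have "\<dots> = 2 * 2 powr (- s) * R * A powr (1/2) * N powr s"
    using R A by (simp add: real_sqrt_mult powr_half_sqrt powr_divide powr_minus_divide)
  finally show ?thesis
    using Hs by simp
qed

definition growth_const :: "real \<Rightarrow> real" where
  "growth_const s = max 1 (2 * sqrt (5 * sobolev_const s))"

lemma iterate_weight_sqrt_le:
  assumes s: "s \<le> 0" and k: "2 \<le> k"
  shows "iterate_weight k * sqrt (real (4 * k + 1) * (sobolev_const s * k)) \<le> (4 * growth_const s) ^ (k - 1)"
proof -
  define K where "K = sobolev_const s"
  have K: "0 \<le> K"
    unfolding K_def using sobolev_const_nonneg[OF s] .
  have "real (4 * k + 1) * (K * k) \<le> (real k)\<^sup>2 * (5 * K)"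
    using K k by (simp add: power2_eq_square algebra_simps mult_left_mono)
  then have "sqrt (real (4 * k + 1) * (K * k)) \<le> real k * sqrt (5 * K)"
    by (metis real_sqrt_le_mono real_sqrt_mult real_sqrt_abs abs_of_nat)
  then have "iterate_weight k * sqrt (real (4 * k + 1) * (K * k)) \<le> iterate_weight k * (real k * sqrt (5 * K))"
    by (intro mult_left_mono iterate_weight_nonneg)
  also have "\<dots> = 4 ^ (k - 1) * (2 * sqrt (5 * K)) / real k"
    unfolding iterate_weight_def using k by (simp add: power2_eq_square field_simps)
  also have "\<dots> \<le> 4 ^ (k - 1) * growth_const s"
  proof -
    have M: "2 * sqrt (5 * K) \<le> growth_const s" "1 \<le> growth_const s"
      unfolding growth_const_def K_def by simp_all
    have "growth_const s * 1 \<le> growth_const s * real k"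
      using M(2) k by (intro mult_left_mono) auto
    then have "4 ^ (k - 1) * (2 * sqrt (5 * K)) \<le> 4 ^ (k - 1) * growth_const s * real k"
      using M(1) by (simp add: mult.assoc)
    then show ?thesis
      using k by (simp add: divide_le_eq)
  qed
  also have "\<dots> \<le> 4 ^ (k - 1) * growth_const s ^ (k - 1)"
  proof -
    have "growth_const s ^ 1 \<le> growth_const s ^ (k - 1)"
      using k by (intro power_increasing) (auto simp: growth_const_def)
    then show ?thesis
      by simp
  qed
  finally show ?thesis
    unfolding K_def by (simp add: power_mult_distrib)
qed

lemma powr_half_eq_sqrt_power:
  assumes "0 \<le> t" "2 \<le> k"
  shows "t powr ((real k - 1) / 2) = sqrt t ^ (k - 1)"
proof (cases "t = 0")
  case False
  then have "t powr ((real k - 1) / 2) = (t powr (1/2)) ^ (k - 1)"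
    using assms by (simp add: powr_powr of_nat_diff flip: powr_realpow)
  then show ?thesis
    using assms by (simp add: powr_half_sqrt)
qed (use assms in simp)

lemma Hs_norm_Uhat_le:
  assumes s: "s \<le> 0" and \<mu>: "\<bar>\<mu>\<bar> = 1" and R: "0 < R" and A: "2 \<le> A" and k: "2 \<le> k" and t: "0 \<le> t"
  shows "in_Hs_hat s (Uhat \<mu> (phi_hat R N A) k t) \<and> Hs_norm_hat s (Uhat \<mu> (phi_hat R N A) k t)
    \<le> t powr ((real k - 1) / 2) * (4 * growth_const s * R * A) ^ (k - 1) * R * gA s A"
proof -
  define W where "W = iterate_weight k * sqrt (real (4 * k + 1) * (sobolev_const s * k))"
  define X where "X = R ^ k * A ^ (k - 1) * sqrt t ^ (k - 1) * gA s A"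
  have X: "0 \<le> X"
    unfolding X_def using R A t gA_nonneg[of s A] by simp
  have "sqrt ((sup_bound R A k t)\<^sup>2 * (real (4 * k + 1) * (sobolev_const s * k * (gA s A)\<^sup>2))) = W * X"
    using R A t gA_nonneg[of s A] sobolev_const_nonneg[OF s] iterate_weight_nonneg[of k]
    by (simp add: W_def X_def sup_bound_def real_sqrt_mult mult_ac)
  also have "\<dots> \<le> (4 * growth_const s) ^ (k - 1) * X"
    unfolding W_def using iterate_weight_sqrt_le[OF s k] X by (rule mult_right_mono)
  also have "\<dots> = t powr ((real k - 1) / 2) * (4 * growth_const s * R * A) ^ (k - 1) * R * gA s A"
  proof -
    have "R ^ k = R ^ (k - 1) * R"
      by (rule power_minus_mult[symmetric]) (use k in simp)
    then show ?thesis
      using k t by (simp add: X_def powr_half_eq_sqrt_power power_mult_distrib mult_ac)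
  qed
  finally have sqrt_le: "sqrt ((sup_bound R A k t)\<^sup>2 * (real (4 * k + 1) * (sobolev_const s * k * (gA s A)\<^sup>2)))
      \<le> t powr ((real k - 1) / 2) * (4 * growth_const s * R * A) ^ (k - 1) * R * gA s A" .
  have Q: "0 \<le> (sup_bound R A k t)\<^sup>2 * (real (4 * k + 1) * (sobolev_const s * k * (gA s A)\<^sup>2))"
    using sobolev_const_nonneg[OF s] by simp
  have "1 \<le> k"
    using k by simp
  note Hs = in_Hs_hat_and_Hs_norm_hat_le[OF Uhat_measurable_at[OF phi_hat_measurable] Q
      nn_integral_weighted_Uhat_le[OF s \<mu> R A this t, where N=N]]
  show ?thesis
    using Hs sqrt_le by (blast intro: order.trans)
qed

theorem lemma5p7:
  fixes s :: real
  assumes "s \<le> 0"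
  shows "\<exists>C>0. \<forall>\<mu> R A N t. \<mu> \<in> {-1, 1} \<and> R > 0 \<and> 2 \<le> A \<and> A \<le> N \<and> t \<ge> 0 \<longrightarrow>
     (in_Hs_hat s (Uhat \<mu> (phi_hat R N A) 1 t) \<and>
      Hs_norm_hat s (Uhat \<mu> (phi_hat R N A) 1 t) \<le> C * R * A powr (1/2) * N powr s) \<and>
     (\<forall>k\<ge>2. in_Hs_hat s (Uhat \<mu> (phi_hat R N A) k t) \<and>
      Hs_norm_hat s (Uhat \<mu> (phi_hat R N A) k t)
        \<le> t powr ((real k - 1) / 2) * (C * R * A) ^ (k - 1) * R * gA s A)"
proof (intro exI[of _ "max (2 * 2 powr (- s)) (4 * growth_const s)"] conjI allI impI)
  let ?C = "max (2 * 2 powr (- s)) (4 * growth_const s)"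
  show "0 < ?C"
    by (simp add: less_max_iff_disj)
  fix \<mu> R A N t :: real
  assume "\<mu> \<in> {-1, 1} \<and> R > 0 \<and> 2 \<le> A \<and> A \<le> N \<and> t \<ge> 0"
  then have \<mu>: "\<bar>\<mu>\<bar> = 1" and R: "0 < R" and A: "2 \<le> A" "A \<le> N" and t: "0 \<le> t"
    by auto
  note U1 = Hs_norm_Uhat_1_le[OF assms R A, of \<mu> t]
  show "in_Hs_hat s (Uhat \<mu> (phi_hat R N A) 1 t)"
    using U1 ..
  show "Hs_norm_hat s (Uhat \<mu> (phi_hat R N A) 1 t) \<le> ?C * R * A powr (1/2) * N powr s"
    using U1 R A by (elim conjE order.trans) (intro mult_right_mono; simp)
  fix k :: nat
  assume k: "2 \<le> k"
  note Uk = Hs_norm_Uhat_le[OF assms \<mu> R A(1) k t, where N=N]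
  show "in_Hs_hat s (Uhat \<mu> (phi_hat R N A) k t)"
    using Uk ..
  have "(4 * growth_const s * R * A) ^ (k - 1) \<le> (?C * R * A) ^ (k - 1)"
    using R A by (intro power_mono mult_right_mono) (auto simp: growth_const_def)
  then have "t powr ((real k - 1) / 2) * (4 * growth_const s * R * A) ^ (k - 1) * R * gA s A
      \<le> t powr ((real k - 1) / 2) * (?C * R * A) ^ (k - 1) * R * gA s A"
    using R gA_nonneg[of s A] by (intro mult_right_mono mult_left_mono) auto
  with Uk show "Hs_norm_hat s (Uhat \<mu> (phi_hat R N A) k t) \<le> t powr ((real k - 1) / 2) * (?C * R * A) ^ (k - 1) * R * gA s A"
    by linarith
qed

end
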